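(* For a weakly coupled POMDP and horizon $T$, the linear relaxation of the MILP (IP) is a relaxation of the MDP approximation of the weakly coupled POMDP: from any feasible solution of the MDP approximation LP one can build a feasible solution of the linear relaxation of (IP) with the same objective value. Furthermore $v^*_{\mathrm{MDP}}\le z_{\mathrm R}$ and $v^*_{\mathrm{his}}\le z_{\mathrm R^{\mathrm c}}\le z_{\mathrm R}$.
   Context: Weakly coupled POMDP: components $m\in[M]$, each a POMDP $(\mathcal X_S^m,\mathcal X_O^m,\mathcal X_A^m,\mathfrak p^m,\mathbf r^m)$ with initial distribution $p^m(s)$, emissions $p^m(o|s)$, transitions $p^m(s'|s,a)$, reward $r^m(s,a,s')$; functions $\mathbf D^m:\mathcal X_A^m\to\mathbb R^q$ and $\mathbf b\in\mathbb R^q_{\ge0}$. The full system is the POMDP with $\mathcal X_S=\prod_m\mathcal X_S^m$, $\mathcal X_O=\prod_m\mathcal X_O^m$, action space $\mathcal X_A=\{\mathbf a\in\prod_m\mathcal X_A^m:\sum_m\mathbf D^m(a^m)\le\mathbf b\}$ (assumed nonempty), $p(\mathbf s)=\prod_m p^m(s^m)$, $p(\mathbf o|\mathbf s)=\prod_m p^m(o^m|s^m)$, $p(\mathbf s'|\mathbf s,\mathbf a)=\prod_m p^m(s'^m|s^m,a^m)$, $r(\mathbf s,\mathbf a,\mathbf s')=\sum_m r^m(s^m,a^m,s'^m)$. $v^*_{\mathrm{his}}$ is the maximum over history-dependent policies $\delta^t_{\mathbf a|\mathbf h}$ (distributions on $\mathcal X_A$ given the history $\mathbf h=(\mathbf o_1,\mathbf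 a_1,\dots,\mathbf o_t)$) of $\mathbb E_\delta[\sum_{t=1}^T r(\mathbf S_t,\mathbf A_t,\mathbf S_{t+1})]$. For a POMDP $(\mathcal X_S,\mathcal X_O,\mathcal X_A,\mathfrak p)$, $\mathcal Q^{\mathrm d}(T,\mathcal X_S,\mathcal X_O,\mathcal X_A,\mathfrak p)$ is the set of $(\tau,\delta)$, $\delta^t_{a|o}\in\{0,1\}$ with $\sum_a\delta^t_{a|o}=1$, and nonnegative $\tau=((\tau^1_s),(\tau^t_{soa}),(\tau^t_{sas'}))$ with (i) $\tau^1_s=p(s)$; (ii) $\sum_{o,a}\tau^t_{soa}=\nu^t_s$, $\nu^1_s=\tau^1_s$, $\nu^t_s=\sum_{s'',a''}\tau^{t-1}_{s''a''s}$ ($t\ge2$); (iii) $\sum_{\bar s}\tau^t_{sa\bar s}=\sum_o\tau^t_{soa}$; (iv) $\tau^t_{sas'}=p(s'|s,a)\sum_{\bar s}\tau^t_{sa\bar s}$; (McCormick) $\tau^t_{soa}\le p(o|s)\nu^t_s$, $\tau^t_{soa}\le\delta^t_{a|o}$, $\tau^t_{soa}\ge p(o|s)\nu^t_s+\delta^t_{a|o}-1$. MILP (IP): maximize $\sum_t\sum_m\sum_{s,a,s'}r^m(s,a,s')\tau^{t,m}_{sas'}$ s.t. $(\tau^m,\delta^m)\in\mathcal Q^{\mathrm d}(T,\mathcal X_S^m,\mathcal X_O^m,\mathcal X_A^m,\mathfrak p^m)$ for all $m$, $\tau^{t,m}_a=\sum_{s,o}\tau^{t,m}_{soa}$, and $\sum_m\sum_{a\in\mathcal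 X_A^m}\mathbf D^m(a)\tau^{t,m}_a\le\mathbf b$ for all $t$. $z_{\mathrm R}$: value of its linear relaxation ($\delta^{t,m}_{a|o}\in[0,1]$). $z_{\mathrm R^{\mathrm c}}$: value of the linear relaxation with, for each $m$ and $t\in\{2,\dots,T\}$, additional nonnegative variables $\tau^{t,m}_{s'a'soa}$ and constraints $\sum_{s',a'}\tau^{t,m}_{s'a'soa}=\tau^{t,m}_{soa}$; $\sum_a\tau^{t,m}_{s'a'soa}=p^m(o|s)p^m(s|s',a')\tau^{t-1,m}_{s'a'}$ where $\tau^{t-1,m}_{s'a'}:=\sum_{\bar s}\tau^{t-1,m}_{s'a'\bar s}$; $\tau^{t,m}_{s'a'soa}=p^m(s|s',a',o)\sum_{\bar s}\tau^{t,m}_{s'a'\bar soa}$ with $p^m(s|s',a',o)=p^m(o|s)p^m(s|s',a')/\sum_{\bar s}p^m(o|\bar s)p^m(\bar s|s',a')$. MDP approximation of the weakly coupled POMDP: the LP maximizing $\sum_t\sum_{\mathbf s,\mathbf a,\mathbf s'}r(\mathbf s,\mathbf a,\mathbf s')\mu^t_{\mathbf s\mathbf a\mathbf s'}$ over nonnegative $\mu^1_{\mathbf s},\mu^t_{\mathbf s\mathbf a\mathbf s'}$ ($\mathbf a\in\mathcal X_A$) with $\mu^1_{\mathbf s}=p(\mathbf s)$, $\sum_{\mathbf a,\mathbf s'}\mu^1_{\mathbf s\mathbf a\mathbf s'}=\mu^1_{\mathbf s}$, $\sum_{\mathbf a,\mathbf s'}\mu^t_{\mathbf s\mathbf a\mathbf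 s'}=\sum_{\mathbf s'',\mathbf a''}\mu^{t-1}_{\mathbf s''\mathbf a''\mathbf s}$ ($t\ge2$), $\mu^t_{\mathbf s\mathbf a\mathbf s'}=p(\mathbf s'|\mathbf s,\mathbf a)\sum_{\bar{\mathbf s}}\mu^t_{\mathbf s\mathbf a\bar{\mathbf s}}$; value $v^*_{\mathrm{MDP}}$. *)

theory Defs
  imports "HOL-Analysis.Analysis"
begin

text \<open>A POMDP with state set St, observation set Ob, action set Ac,
  initial distribution init s = p(s), emissions emis s ob = p(ob|s),
  transitions trans s a s' = p(s'|s,a) and reward rew s a s' = r(s,a,s').\<close>

record ('s, 'o, 'a) pomdp =
  St :: "'s set"
  Ob :: "'o set"
  Ac :: "'a set"
  init :: "'s \<Rightarrow> real"
  emis :: "'s \<Rightarrow> 'o \<Rightarrow> real"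
  trans :: "'s \<Rightarrow> 'a \<Rightarrow> 's \<Rightarrow> real"
  rew :: "'s \<Rightarrow> 'a \<Rightarrow> 's \<Rightarrow> real"

definition wf_pomdp :: "('s, 'o, 'a) pomdp \<Rightarrow> bool" where
  "wf_pomdp P \<longleftrightarrow>
     finite (St P) \<and> finite (Ob P) \<and> finite (Ac P) \<and>
     (\<forall>s\<in>St P. init P s \<ge> 0) \<and> (\<Sum>s\<in>St P. init P s) = 1 \<and>
     (\<forall>s\<in>St P. (\<forall>ob\<in>Ob P. emis P s ob \<ge> 0) \<and> (\<Sum>ob\<in>Ob P. emis P s ob) = 1) \<and>
     (\<forall>s\<in>St P. \<forall>a\<in>Ac P.
        (\<forall>s'\<in>St P. trans P s a s' \<ge> 0) \<and> (\<Sum>s'\<in>St P. trans P s a s') = 1)"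

text \<open>Components are indexed by m < M; D m a j is the j-th coordinate (j < q) of
  D^m(a); b j the j-th coordinate of b. The linking constraint
  sum_m D^m(a^m) <= b is componentwise.\<close>

definition joint ::
  "(nat \<Rightarrow> ('s, 'o, 'a) pomdp) \<Rightarrow> nat \<Rightarrow> nat \<Rightarrow> (nat \<Rightarrow> 'a \<Rightarrow> nat \<Rightarrow> real) \<Rightarrow> (nat \<Rightarrow> real)
    \<Rightarrow> (nat \<Rightarrow> 's, nat \<Rightarrow> 'o, nat \<Rightarrow> 'a) pomdp" where
  "joint C M q D b =
    \<lparr> St = PiE {..<M} (\<lambda>m. St (C m)),
      Ob = PiE {..<M} (\<lambda>m. Ob (C m)),
      Ac = {a \<in> PiE {..<M} (\<lambda>m. Ac (C m)). \<forall>j<q. (\<Sum>m<M. D m (a m) j) \<le> b j},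
      init = (\<lambda>s. \<Prod>m<M. init (C m) (s m)),
      emis = (\<lambda>s ob. \<Prod>m<M. emis (C m) (s m) (ob m)),
      trans = (\<lambda>s a s'. \<Prod>m<M. trans (C m) (s m) (a m) (s' m)),
      rew = (\<lambda>s a s'. \<Sum>m<M. rew (C m) (s m) (a m) (s' m)) \<rparr>"

text \<open>A history-dependent policy: pol t (os, as) a is the probability of action a at
  time t given the history (o_1, a_1, ..., o_t), stored as the list of the t
  observations and the list of the t-1 previous actions.\<close>

definition policy_valid :: "nat \<Rightarrow> ('s, 'o, 'a) pomdp \<Rightarrow> (nat \<Rightarrow> 'o list \<times> 'a list \<Rightarrow> 'a \<Rightarrow> real) \<Rightarrow> bool" where
  "policy_valid T P pol \<longleftrightarrow>
     (\<forall>t\<in>{1..T}. \<forall>h. (\<forall>a\<in>Ac P. pol t h a \<ge> 0) \<and> (\<Sum>a\<in>Ac P. pol t h a) = 1)"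

definition lists_len :: "'x set \<Rightarrow> nat \<Rightarrow> 'x list set" where
  "lists_len A n = {xs. set xs \<subseteq> A \<and> length xs = n}"

text \<open>Probability of the trajectory s_1 o_1 a_1 s_2 ... o_T a_T s_{T+1}
  (lists are 0-indexed: ss!t = s_{t+1}).\<close>

definition traj_prob ::
  "nat \<Rightarrow> ('s, 'o, 'a) pomdp \<Rightarrow> (nat \<Rightarrow> 'o list \<times> 'a list \<Rightarrow> 'a \<Rightarrow> real)
     \<Rightarrow> 's list \<Rightarrow> 'o list \<Rightarrow> 'a list \<Rightarrow> real" where
  "traj_prob T P pol ss os as =
     init P (ss ! 0) *
     (\<Prod>t<T. emis P (ss ! t) (os ! t) * pol (Suc t) (take (Suc t) os, take t as) (as ! t)
             * trans P (ss ! t) (as ! t) (ss ! Suc t))"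

definition his_value :: "nat \<Rightarrow> ('s, 'o, 'a) pomdp \<Rightarrow> (nat \<Rightarrow> 'o list \<times> 'a list \<Rightarrow> 'a \<Rightarrow> real) \<Rightarrow> real" where
  "his_value T P pol =
     (\<Sum>ss\<in>lists_len (St P) (Suc T). \<Sum>os\<in>lists_len (Ob P) T. \<Sum>as\<in>lists_len (Ac P) T.
        traj_prob T P pol ss os as * (\<Sum>t<T. rew P (ss ! t) (as ! t) (ss ! Suc t)))"

definition v_his :: "nat \<Rightarrow> ('s, 'o, 'a) pomdp \<Rightarrow> real" where
  "v_his T P = Sup {his_value T P pol | pol. policy_valid T P pol}"

definition mdp_feasible ::
  "nat \<Rightarrow> ('s, 'o, 'a) pomdp \<Rightarrow> ('s \<Rightarrow> real) \<Rightarrow> (nat \<Rightarrow> 's \<Rightarrow> 'a \<Rightarrow> 's \<Rightarrow> real) \<Rightarrow> bool" where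
  "mdp_feasible T P mu1 mu \<longleftrightarrow>
     (\<forall>s\<in>St P. mu1 s \<ge> 0 \<and> mu1 s = init P s) \<and>
     (\<forall>t\<in>{1..T}. \<forall>s\<in>St P. \<forall>a\<in>Ac P. \<forall>s'\<in>St P. mu t s a s' \<ge> 0) \<and>
     (\<forall>t\<in>{1..T}. \<forall>s\<in>St P.
        (\<Sum>a\<in>Ac P. \<Sum>s'\<in>St P. mu t s a s') =
        (if t = 1 then mu1 s else (\<Sum>s''\<in>St P. \<Sum>a''\<in>Ac P. mu (t - 1) s'' a'' s))) \<and>
     (\<forall>t\<in>{1..T}. \<forall>s\<in>St P. \<forall>a\<in>Ac P. \<forall>s'\<in>St P.
        mu t s a s' = trans P s a s' * (\<Sum>sb\<in>St P. mu t s a sb))"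

definition mdp_obj :: "nat \<Rightarrow> ('s, 'o, 'a) pomdp \<Rightarrow> (nat \<Rightarrow> 's \<Rightarrow> 'a \<Rightarrow> 's \<Rightarrow> real) \<Rightarrow> real" where
  "mdp_obj T P mu = (\<Sum>t=1..T. \<Sum>s\<in>St P. \<Sum>a\<in>Ac P. \<Sum>s'\<in>St P. rew P s a s' * mu t s a s')"

definition v_MDP :: "nat \<Rightarrow> ('s, 'o, 'a) pomdp \<Rightarrow> real" where
  "v_MDP T P = Sup {mdp_obj T P mu | mu1 mu. mdp_feasible T P mu1 mu}"

definition nuQ :: "('s, 'o, 'a) pomdp \<Rightarrow> ('s \<Rightarrow> real) \<Rightarrow> (nat \<Rightarrow> 's \<Rightarrow> 'a \<Rightarrow> 's \<Rightarrow> real) \<Rightarrow> nat \<Rightarrow> 's \<Rightarrow> real" where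
  "nuQ P tau1 taut t s =
     (if t = 1 then tau1 s else (\<Sum>s''\<in>St P. \<Sum>a''\<in>Ac P. taut (t - 1) s'' a'' s))"

text \<open>Constraints of Q^d except the integrality of delta (delta only in [0,1]).
  tauo t s ob a = tau^t_{soa}, taut t s a s' = tau^t_{sas'}, dl t ob a = delta^t_{a|ob}.\<close>

definition QR ::
  "nat \<Rightarrow> ('s, 'o, 'a) pomdp \<Rightarrow> ('s \<Rightarrow> real) \<Rightarrow> (nat \<Rightarrow> 's \<Rightarrow> 'o \<Rightarrow> 'a \<Rightarrow> real)
     \<Rightarrow> (nat \<Rightarrow> 's \<Rightarrow> 'a \<Rightarrow> 's \<Rightarrow> real) \<Rightarrow> (nat \<Rightarrow> 'o \<Rightarrow> 'a \<Rightarrow> real) \<Rightarrow> bool" where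
  "QR T P tau1 tauo taut dl \<longleftrightarrow>
     (\<forall>t\<in>{1..T}. \<forall>ob\<in>Ob P. (\<forall>a\<in>Ac P. 0 \<le> dl t ob a \<and> dl t ob a \<le> 1) \<and> (\<Sum>a\<in>Ac P. dl t ob a) = 1) \<and>
     (\<forall>s\<in>St P. tau1 s \<ge> 0 \<and> tau1 s = init P s) \<and>
     (\<forall>t\<in>{1..T}. \<forall>s\<in>St P. \<forall>ob\<in>Ob P. \<forall>a\<in>Ac P. tauo t s ob a \<ge> 0) \<and>
     (\<forall>t\<in>{1..T}. \<forall>s\<in>St P. \<forall>a\<in>Ac P. \<forall>s'\<in>St P. taut t s a s' \<ge> 0) \<and>
     (\<forall>t\<in>{1..T}. \<forall>s\<in>St P. (\<Sum>ob\<in>Ob P. \<Sum>a\<in>Ac P. tauo t s ob a) = nuQ P tau1 taut t s) \<and>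
     (\<forall>t\<in>{1..T}. \<forall>s\<in>St P. \<forall>a\<in>Ac P.
        (\<Sum>sb\<in>St P. taut t s a sb) = (\<Sum>ob\<in>Ob P. tauo t s ob a)) \<and>
     (\<forall>t\<in>{1..T}. \<forall>s\<in>St P. \<forall>a\<in>Ac P. \<forall>s'\<in>St P.
        taut t s a s' = trans P s a s' * (\<Sum>sb\<in>St P. taut t s a sb)) \<and>
     (\<forall>t\<in>{1..T}. \<forall>s\<in>St P. \<forall>ob\<in>Ob P. \<forall>a\<in>Ac P.
        tauo t s ob a \<le> emis P s ob * nuQ P tau1 taut t s \<and>
        tauo t s ob a \<le> dl t ob a \<and>
        tauo t s ob a \<ge> emis P s ob * nuQ P tau1 taut t s + dl t ob a - 1)"

definition QD ::
  "nat \<Rightarrow> ('s, 'o, 'a) pomdp \<Rightarrow> ('s \<Rightarrow> real) \<Rightarrow> (nat \<Rightarrow> 's \<Rightarrow> 'o \<Rightarrow> 'a \<Rightarrow> real)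
     \<Rightarrow> (nat \<Rightarrow> 's \<Rightarrow> 'a \<Rightarrow> 's \<Rightarrow> real) \<Rightarrow> (nat \<Rightarrow> 'o \<Rightarrow> 'a \<Rightarrow> real) \<Rightarrow> bool" where
  "QD T P tau1 tauo taut dl \<longleftrightarrow> QR T P tau1 tauo taut dl \<and>
     (\<forall>t\<in>{1..T}. \<forall>ob\<in>Ob P. \<forall>a\<in>Ac P. dl t ob a \<in> {0, 1})"

definition relax_feasible ::
  "nat \<Rightarrow> (nat \<Rightarrow> ('s, 'o, 'a) pomdp) \<Rightarrow> nat \<Rightarrow> nat \<Rightarrow> (nat \<Rightarrow> 'a \<Rightarrow> nat \<Rightarrow> real) \<Rightarrow> (nat \<Rightarrow> real)
     \<Rightarrow> (nat \<Rightarrow> 's \<Rightarrow> real) \<Rightarrow> (nat \<Rightarrow> nat \<Rightarrow> 's \<Rightarrow> 'o \<Rightarrow> 'a \<Rightarrow> real)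
     \<Rightarrow> (nat \<Rightarrow> nat \<Rightarrow> 's \<Rightarrow> 'a \<Rightarrow> 's \<Rightarrow> real) \<Rightarrow> (nat \<Rightarrow> nat \<Rightarrow> 'o \<Rightarrow> 'a \<Rightarrow> real) \<Rightarrow> bool" where
  "relax_feasible T C M q D b tau1 tauo taut dl \<longleftrightarrow>
     (\<forall>m<M. QR T (C m) (tau1 m) (tauo m) (taut m) (dl m)) \<and>
     (\<forall>t\<in>{1..T}. \<forall>j<q.
        (\<Sum>m<M. \<Sum>a\<in>Ac (C m). D m a j * (\<Sum>s\<in>St (C m). \<Sum>ob\<in>Ob (C m). tauo m t s ob a)) \<le> b j)"

definition relax_obj ::
  "nat \<Rightarrow> (nat \<Rightarrow> ('s, 'o, 'a) pomdp) \<Rightarrow> nat \<Rightarrow> (nat \<Rightarrow> nat \<Rightarrow> 's \<Rightarrow> 'a \<Rightarrow> 's \<Rightarrow> real) \<Rightarrow> real" where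
  "relax_obj T C M taut =
     (\<Sum>t=1..T. \<Sum>m<M. \<Sum>s\<in>St (C m). \<Sum>a\<in>Ac (C m). \<Sum>s'\<in>St (C m).
        rew (C m) s a s' * taut m t s a s')"

definition z_R ::
  "nat \<Rightarrow> (nat \<Rightarrow> ('s, 'o, 'a) pomdp) \<Rightarrow> nat \<Rightarrow> nat \<Rightarrow> (nat \<Rightarrow> 'a \<Rightarrow> nat \<Rightarrow> real) \<Rightarrow> (nat \<Rightarrow> real) \<Rightarrow> real" where
  "z_R T C M q D b =
     Sup {relax_obj T C M taut | tau1 tauo taut dl. relax_feasible T C M q D b tau1 tauo taut dl}"

definition pcond :: "('s, 'o, 'a) pomdp \<Rightarrow> 's \<Rightarrow> 'a \<Rightarrow> 'o \<Rightarrow> 's \<Rightarrow> real" where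
  "pcond P s' a' ob s =
     emis P s ob * trans P s' a' s / (\<Sum>sb\<in>St P. emis P sb ob * trans P s' a' sb)"

text \<open>tauc t s' a' s ob a = tau^t_{s'a'soa}, for t in {2..T}.\<close>

definition valid_cuts ::
  "nat \<Rightarrow> ('s, 'o, 'a) pomdp \<Rightarrow> (nat \<Rightarrow> 's \<Rightarrow> 'o \<Rightarrow> 'a \<Rightarrow> real) \<Rightarrow> (nat \<Rightarrow> 's \<Rightarrow> 'a \<Rightarrow> 's \<Rightarrow> real)
     \<Rightarrow> (nat \<Rightarrow> 's \<Rightarrow> 'a \<Rightarrow> 's \<Rightarrow> 'o \<Rightarrow> 'a \<Rightarrow> real) \<Rightarrow> bool" where
  "valid_cuts T P tauo taut tauc \<longleftrightarrow>
     (\<forall>t\<in>{2..T}. \<forall>s'\<in>St P. \<forall>a'\<in>Ac P. \<forall>s\<in>St P. \<forall>ob\<in>Ob P. \<forall>a\<in>Ac P.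
        tauc t s' a' s ob a \<ge> 0 \<and>
        tauc t s' a' s ob a = pcond P s' a' ob s * (\<Sum>sb\<in>St P. tauc t s' a' sb ob a)) \<and>
     (\<forall>t\<in>{2..T}. \<forall>s\<in>St P. \<forall>ob\<in>Ob P. \<forall>a\<in>Ac P.
        (\<Sum>s'\<in>St P. \<Sum>a'\<in>Ac P. tauc t s' a' s ob a) = tauo t s ob a) \<and>
     (\<forall>t\<in>{2..T}. \<forall>s'\<in>St P. \<forall>a'\<in>Ac P. \<forall>s\<in>St P. \<forall>ob\<in>Ob P.
        (\<Sum>a\<in>Ac P. tauc t s' a' s ob a) =
          emis P s ob * trans P s' a' s * (\<Sum>sb\<in>St P. taut (t - 1) s' a' sb))"

definition z_Rc ::
  "nat \<Rightarrow> (nat \<Rightarrow> ('s, 'o, 'a) pomdp) \<Rightarrow> nat \<Rightarrow> nat \<Rightarrow> (nat \<Rightarrow> 'a \<Rightarrow> nat \<Rightarrow> real) \<Rightarrow> (nat \<Rightarrow> real) \<Rightarrow> real" where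
  "z_Rc T C M q D b =
     Sup {relax_obj T C M taut | tau1 tauo taut dl tauc.
            relax_feasible T C M q D b tau1 tauo taut dl \<and>
            (\<forall>m<M. valid_cuts T (C m) (tauo m) (taut m) (tauc m))}"

end

theory Submission
  imports Defs
begin

text \<open>
  All three inequalities compare suprema of linear programs, so it suffices to map feasible
  points to feasible points with the same objective value. Both an MDP solution \<open>\<mu>\<close> and a
  history-dependent policy induce an occupation measure of the joint system: a pair
  \<open>X t s o a\<close>, \<open>Y t s a s'\<close> satisfying the flow constraints of the relaxation together with
  the factorisation \<open>\<Sum>\<^sub>a X t s o a = p(o|s) \<nu>\<^sup>t\<^sub>s\<close>. Because the joint initial distribution,
  emissions and transitions are products, the marginals of \<open>X\<close> and \<open>Y\<close> on a single component
  satisfy the flow constraints of that component, and the linking constraint is the average of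
  \<open>\<Sum>\<^sub>m D\<^sup>m(a\<^sup>m) \<le> b\<close> over the distribution of joint actions. The missing policy variables
  \<open>\<delta>\<^sup>t(a|o)\<close> are the action marginals plus a uniform share of the unused mass, which satisfies
  the McCormick inequalities. For a policy, the probabilities of two consecutive steps moreover
  give the variables \<open>\<tau>\<^sup>t(s',a',s,o,a)\<close> of the valid cuts. Finally every feasible point of the
  relaxation is a probability flow, so the relaxed objective is bounded and the suprema are
  finite.
\<close>

lemma sum_if_const: "(\<Sum>x\<in>A. if c then f x else 0) = (if c then (\<Sum>x\<in>A. f x) else (0::real))"
  by simp

lemma mult_if_zero: "c * (if P then x else 0) = (if P then c * x else (0::real))"
  by simp

lemma sum_push_in3:
  "(\<Sum>x\<in>X. \<Sum>s\<in>A. \<Sum>a\<in>B. \<Sum>s'\<in>E. f x s a s') = (\<Sum>s\<in>A. \<Sum>a\<in>B. \<Sum>s'\<in>E. \<Sum>x\<in>X. (f x s a s' :: real))"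
proof -
  have "(\<Sum>x\<in>X. \<Sum>s\<in>A. \<Sum>a\<in>B. \<Sum>s'\<in>E. f x s a s') = (\<Sum>s\<in>A. \<Sum>x\<in>X. \<Sum>a\<in>B. \<Sum>s'\<in>E. f x s a s')"
    by (rule sum.swap)
  also have "\<dots> = (\<Sum>s\<in>A. \<Sum>a\<in>B. \<Sum>x\<in>X. \<Sum>s'\<in>E. f x s a s')"
    by (intro sum.cong refl sum.swap)
  also have "\<dots> = (\<Sum>s\<in>A. \<Sum>a\<in>B. \<Sum>s'\<in>E. \<Sum>x\<in>X. f x s a s')"
    by (intro sum.cong refl sum.swap)
  finally show ?thesis .
qed

lemma sum_pull_out2:
  "(\<Sum>x\<in>A. \<Sum>y\<in>B. \<Sum>z\<in>E. f x y z) = (\<Sum>z\<in>E. \<Sum>x\<in>A. \<Sum>y\<in>B. (f x y z :: real))"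
proof -
  have "(\<Sum>x\<in>A. \<Sum>y\<in>B. \<Sum>z\<in>E. f x y z) = (\<Sum>x\<in>A. \<Sum>z\<in>E. \<Sum>y\<in>B. f x y z)"
    by (intro sum.cong refl sum.swap)
  also have "\<dots> = (\<Sum>z\<in>E. \<Sum>x\<in>A. \<Sum>y\<in>B. f x y z)" by (rule sum.swap)
  finally show ?thesis .
qed

lemma sum_collapse2:
  assumes "\<And>u. u \<in> U \<Longrightarrow> g u \<in> A" "\<And>v. v \<in> V \<Longrightarrow> h v \<in> B" "finite A" "finite B"
  shows "(\<Sum>x\<in>A. \<Sum>y\<in>B. \<Sum>u\<in>U. \<Sum>v\<in>V. if g u = x then if h v = y then H u v else 0 else 0)
       = (\<Sum>u\<in>U. \<Sum>v\<in>V. (H u v :: real))"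
proof -
  have "(\<Sum>x\<in>A. \<Sum>y\<in>B. \<Sum>u\<in>U. \<Sum>v\<in>V. if g u = x then if h v = y then H u v else 0 else 0)
     = (\<Sum>x\<in>A. \<Sum>u\<in>U. \<Sum>v\<in>V. \<Sum>y\<in>B. if g u = x then if h v = y then H u v else 0 else 0)"
    by (intro sum.cong refl) (subst sum.swap, intro sum.cong refl sum.swap)
  also have "\<dots> = (\<Sum>u\<in>U. \<Sum>v\<in>V. \<Sum>x\<in>A. \<Sum>y\<in>B. if g u = x then if h v = y then H u v else 0 else 0)"
    by (subst sum.swap, intro sum.cong refl sum.swap)
  also have "\<dots> = (\<Sum>u\<in>U. \<Sum>v\<in>V. H u v)"
    using assms by (intro sum.cong refl) (simp add: sum_if_const)
  finally show ?thesis .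
qed

lemma sum_PiE_marginal:
  fixes f :: "'i \<Rightarrow> 'x \<Rightarrow> real"
  assumes fin: "finite I" "\<And>k. k \<in> I \<Longrightarrow> finite (A k)" and m: "m \<in> I" and \<sigma>: "\<sigma> \<in> A m"
  shows "(\<Sum>s\<in>PiE I A. if s m = \<sigma> then \<Prod>k\<in>I. f k (s k) else 0) = f m \<sigma> * (\<Prod>k\<in>I-{m}. \<Sum>x\<in>A k. f k x)"
proof -
  define f' where "f' k x = (if k = m then (if x = \<sigma> then f k x else 0) else f k x)" for k x
  have "(\<Prod>k\<in>I. \<Sum>x\<in>A k. f' k x) = (\<Sum>g\<in>PiE I A. \<Prod>k\<in>I. f' k (g k))"
    by (rule prod_sum_PiE) (use fin in auto)
  moreover have "(\<Prod>k\<in>I. \<Sum>x\<in>A k. f' k x) = (\<Sum>x\<in>A m. f' m x) * (\<Prod>k\<in>I-{m}. \<Sum>x\<in>A k. f' k x)"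
    using m fin by (simp add: prod.remove)
  moreover have "(\<Sum>x\<in>A m. f' m x) = f m \<sigma>"
    using \<sigma> fin m by (simp add: f'_def)
  moreover have "(\<Prod>k\<in>I-{m}. \<Sum>x\<in>A k. f' k x) = (\<Prod>k\<in>I-{m}. \<Sum>x\<in>A k. f k x)"
    by (rule prod.cong) (auto simp: f'_def)
  moreover have "(\<Prod>k\<in>I. f' k (g k)) = (if g m = \<sigma> then \<Prod>k\<in>I. f k (g k) else 0)" for g
  proof -
    have "(\<Prod>k\<in>I. f' k (g k)) = f' m (g m) * (\<Prod>k\<in>I-{m}. f' k (g k))"
      using m fin by (simp add: prod.remove)
    also have "(\<Prod>k\<in>I-{m}. f' k (g k)) = (\<Prod>k\<in>I-{m}. f k (g k))"
      by (rule prod.cong) (auto simp: f'_def)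
    also have "(\<Prod>k\<in>I. f k (g k)) = f m (g m) * (\<Prod>k\<in>I-{m}. f k (g k))"
      using m fin by (simp add: prod.remove)
    ultimately show ?thesis by (simp add: f'_def)
  qed
  ultimately show ?thesis by simp
qed

lemma sum_PiE_marginal_normalized:
  fixes f :: "'i \<Rightarrow> 'x \<Rightarrow> real"
  assumes "finite I" "\<And>k. k \<in> I \<Longrightarrow> finite (A k)" "m \<in> I" "\<sigma> \<in> A m"
    and "\<And>k. k \<in> I \<Longrightarrow> k \<noteq> m \<Longrightarrow> (\<Sum>x\<in>A k. f k x) = 1"
  shows "(\<Sum>s\<in>PiE I A. if s m = \<sigma> then \<Prod>k\<in>I. f k (s k) else 0) = f m \<sigma>"
  using sum_PiE_marginal[of I A m \<sigma> f] assms by (simp add: prod.neutral)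

lemma sum_PiE_prod_normalized:
  fixes f :: "'i \<Rightarrow> 'x \<Rightarrow> real"
  assumes "finite I" "\<And>k. k \<in> I \<Longrightarrow> finite (A k)" "\<And>k. k \<in> I \<Longrightarrow> (\<Sum>x\<in>A k. f k x) = 1"
  shows "(\<Sum>s\<in>PiE I A. \<Prod>k\<in>I. f k (s k)) = 1"
  by (subst prod_sum_PiE[symmetric]) (use assms in auto)

lemma mccormick_completion:
  fixes \<tau> :: "'x \<Rightarrow> 'y \<Rightarrow> real" and E :: "'x \<Rightarrow> real"
  assumes fin: "finite S" "finite A" "A \<noteq> {}"
    and nn: "\<And>\<sigma> \<alpha>. \<sigma> \<in> S \<Longrightarrow> \<alpha> \<in> A \<Longrightarrow> \<tau> \<sigma> \<alpha> \<ge> 0"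
    and sE: "\<And>\<sigma>. \<sigma> \<in> S \<Longrightarrow> (\<Sum>\<alpha>\<in>A. \<tau> \<sigma> \<alpha>) = E \<sigma>"
    and c1: "(\<Sum>\<sigma>\<in>S. E \<sigma>) \<le> 1"
  defines "d \<equiv> \<lambda>\<alpha>. (\<Sum>\<sigma>\<in>S. \<tau> \<sigma> \<alpha>) + (1 - (\<Sum>\<sigma>\<in>S. E \<sigma>)) / real (card A)"
  shows "\<alpha> \<in> A \<Longrightarrow> 0 \<le> d \<alpha>" "\<alpha> \<in> A \<Longrightarrow> d \<alpha> \<le> 1" "(\<Sum>\<alpha>\<in>A. d \<alpha>) = 1"
    "\<sigma> \<in> S \<Longrightarrow> \<alpha> \<in> A \<Longrightarrow> \<tau> \<sigma> \<alpha> \<le> d \<alpha>"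
    "\<sigma> \<in> S \<Longrightarrow> \<alpha> \<in> A \<Longrightarrow> E \<sigma> + d \<alpha> - 1 \<le> \<tau> \<sigma> \<alpha>"
proof -
  define c where "c = (\<Sum>\<sigma>\<in>S. E \<sigma>)"
  have n1: "real (card A) \<ge> 1" using fin by (simp add: Suc_le_eq card_gt_0_iff)
  have q0: "(1 - c) / real (card A) \<ge> 0" using c1 n1 by (simp add: c_def)
  have q1: "(1 - c) / real (card A) \<le> 1 - c"
  proof -
    have "(1 - c) / real (card A) \<le> (1 - c) / 1"
      by (rule divide_left_mono) (use c1 n1 in \<open>auto simp: c_def\<close>)
    then show ?thesis by simp
  qed
  have le: "\<tau> \<sigma> \<alpha> \<le> E \<sigma>" if "\<sigma> \<in> S" "\<alpha> \<in> A" for \<sigma> \<alpha>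
    using member_le_sum[of \<alpha> A "\<tau> \<sigma>"] that fin nn sE by auto
  show "0 \<le> d \<alpha>" if "\<alpha> \<in> A" for \<alpha>
    using that q0 nn by (auto simp: d_def c_def intro!: add_nonneg_nonneg sum_nonneg)
  show "d \<alpha> \<le> 1" if "\<alpha> \<in> A" for \<alpha>
  proof -
    have "(\<Sum>\<sigma>\<in>S. \<tau> \<sigma> \<alpha>) \<le> c" unfolding c_def using le that by (intro sum_mono) auto
    then show ?thesis using q1 by (simp add: d_def c_def)
  qed
  show "(\<Sum>\<alpha>\<in>A. d \<alpha>) = 1"
  proof -
    have "(\<Sum>\<alpha>\<in>A. \<Sum>\<sigma>\<in>S. \<tau> \<sigma> \<alpha>) = c" unfolding c_def using sE by (subst sum.swap) simp
    moreover have "(\<Sum>\<alpha>\<in>A. (1 - c) / real (card A)) = 1 - c" using n1 by simp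
    ultimately show ?thesis by (simp add: d_def c_def[symmetric] sum.distrib)
  qed
  show "\<tau> \<sigma> \<alpha> \<le> d \<alpha>" if "\<sigma> \<in> S" "\<alpha> \<in> A" for \<sigma> \<alpha>
  proof -
    have "\<tau> \<sigma> \<alpha> \<le> (\<Sum>\<sigma>\<in>S. \<tau> \<sigma> \<alpha>)" using that fin nn by (intro member_le_sum) auto
    then show ?thesis using q0 by (simp add: d_def c_def)
  qed
  show "E \<sigma> + d \<alpha> - 1 \<le> \<tau> \<sigma> \<alpha>" if "\<sigma> \<in> S" "\<alpha> \<in> A" for \<sigma> \<alpha>
  proof -
    have "(\<Sum>\<sigma>'\<in>S. \<tau> \<sigma>' \<alpha>) = \<tau> \<sigma> \<alpha> + (\<Sum>\<sigma>'\<in>S-{\<sigma>}. \<tau> \<sigma>' \<alpha>)" using that fin by (simp add: sum.remove)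
    moreover have "c = E \<sigma> + (\<Sum>\<sigma>'\<in>S-{\<sigma>}. E \<sigma>')" using that fin by (simp add: sum.remove c_def)
    moreover have "(\<Sum>\<sigma>'\<in>S-{\<sigma>}. \<tau> \<sigma>' \<alpha>) \<le> (\<Sum>\<sigma>'\<in>S-{\<sigma>}. E \<sigma>')" using le that by (intro sum_mono) auto
    ultimately show ?thesis using q1 by (simp add: d_def c_def[symmetric])
  qed
qed

lemma sum_nuQ_eq_1:
  assumes wf: "wf_pomdp P" and init: "\<forall>s\<in>St P. tau1 s = init P s"
    and flow: "\<forall>t\<in>{1..T}. \<forall>s\<in>St P. (\<Sum>ob\<in>Ob P. \<Sum>a\<in>Ac P. tauo t s ob a) = nuQ P tau1 taut t s"
    and balance: "\<forall>t\<in>{1..T}. \<forall>s\<in>St P. \<forall>a\<in>Ac P. (\<Sum>sb\<in>St P. taut t s a sb) = (\<Sum>ob\<in>Ob P. tauo t s ob a)"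
  shows "t \<in> {1..T} \<Longrightarrow> (\<Sum>s\<in>St P. nuQ P tau1 taut t s) = 1"
proof (induction t)
  case 0
  then show ?case by simp
next
  case (Suc t)
  show ?case
  proof (cases "t = 0")
    case True
    then show ?thesis using wf init by (simp add: nuQ_def wf_pomdp_def)
  next
    case False
    then have t: "t \<in> {1..T}" using Suc.prems by auto
    have "(\<Sum>s\<in>St P. nuQ P tau1 taut (Suc t) s) = (\<Sum>s\<in>St P. \<Sum>s''\<in>St P. \<Sum>a''\<in>Ac P. taut t s'' a'' s)"
      using False by (simp add: nuQ_def)
    also have "\<dots> = (\<Sum>s''\<in>St P. \<Sum>a''\<in>Ac P. \<Sum>s\<in>St P. taut t s'' a'' s)"
      by (rule sum_pull_out2[symmetric])
    also have "\<dots> = (\<Sum>s''\<in>St P. \<Sum>a''\<in>Ac P. \<Sum>ob\<in>Ob P. tauo t s'' ob a'')"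
      using balance t by (intro sum.cong refl) auto
    also have "\<dots> = (\<Sum>s''\<in>St P. \<Sum>ob\<in>Ob P. \<Sum>a''\<in>Ac P. tauo t s'' ob a'')"
      by (intro sum.cong refl sum.swap)
    also have "\<dots> = (\<Sum>s''\<in>St P. nuQ P tau1 taut t s'')"
      using flow t by simp
    also have "\<dots> = 1" using Suc.IH t by simp
    finally show ?thesis .
  qed
qed

lemma QR_init:
  assumes "QR T P tau1 tauo taut dl"
  shows "\<forall>s\<in>St P. tau1 s = init P s"
proof -
  have "\<forall>s\<in>St P. tau1 s \<ge> 0 \<and> tau1 s = init P s"
    using assms unfolding QR_def by (elim conjE) assumption
  then show ?thesis by blast
qed

lemma QR_sas_nonneg:
  "QR T P tau1 tauo taut dl \<Longrightarrow> \<forall>t\<in>{1..T}. \<forall>s\<in>St P. \<forall>a\<in>Ac P. \<forall>s'\<in>St P. taut t s a s' \<ge> 0"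
  unfolding QR_def by blast

lemma QR_flow:
  "QR T P tau1 tauo taut dl \<Longrightarrow>
    \<forall>t\<in>{1..T}. \<forall>s\<in>St P. (\<Sum>ob\<in>Ob P. \<Sum>a\<in>Ac P. tauo t s ob a) = nuQ P tau1 taut t s"
  unfolding QR_def by blast

lemma QR_balance:
  "QR T P tau1 tauo taut dl \<Longrightarrow>
    \<forall>t\<in>{1..T}. \<forall>s\<in>St P. \<forall>a\<in>Ac P. (\<Sum>sb\<in>St P. taut t s a sb) = (\<Sum>ob\<in>Ob P. tauo t s ob a)"
  unfolding QR_def by blast

lemma QR_sas_le_1:
  assumes wf: "wf_pomdp P" and Q: "QR T P tau1 tauo taut dl" and t: "t \<in> {1..T}"
    and h: "s \<in> St P" "a \<in> Ac P" "s' \<in> St P"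
  shows "taut t s a s' \<le> 1"
proof -
  have fin: "finite (St P)" "finite (Ac P)" using wf by (auto simp: wf_pomdp_def)
  have nn: "\<And>s a s'. s \<in> St P \<Longrightarrow> a \<in> Ac P \<Longrightarrow> s' \<in> St P \<Longrightarrow> taut t s a s' \<ge> 0"
    using QR_sas_nonneg[OF Q] t by auto
  have "taut t s a s' \<le> (\<Sum>s'\<in>St P. taut t s a s')"
    using h fin nn by (intro member_le_sum) auto
  also have "\<dots> \<le> (\<Sum>a\<in>Ac P. \<Sum>s'\<in>St P. taut t s a s')"
    using h fin nn by (intro member_le_sum[of a "Ac P" "\<lambda>a. \<Sum>s'\<in>St P. taut t s a s'"] sum_nonneg) auto
  also have "\<dots> \<le> (\<Sum>s\<in>St P. \<Sum>a\<in>Ac P. \<Sum>s'\<in>St P. taut t s a s')"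
    using h fin nn
    by (intro member_le_sum[of s "St P" "\<lambda>s. \<Sum>a\<in>Ac P. \<Sum>s'\<in>St P. taut t s a s'"] sum_nonneg) auto
  also have "\<dots> = (\<Sum>s\<in>St P. \<Sum>a\<in>Ac P. \<Sum>ob\<in>Ob P. tauo t s ob a)"
    using QR_balance[OF Q] t by (intro sum.cong refl) auto
  also have "\<dots> = (\<Sum>s\<in>St P. \<Sum>ob\<in>Ob P. \<Sum>a\<in>Ac P. tauo t s ob a)"
    by (intro sum.cong refl sum.swap)
  also have "\<dots> = (\<Sum>s\<in>St P. nuQ P tau1 taut t s)"
    using QR_flow[OF Q] t by simp
  also have "\<dots> = 1"
    using sum_nuQ_eq_1[OF wf QR_init QR_flow QR_balance, OF Q Q Q t] .
  finally show ?thesis .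
qed

lemma relax_obj_bounded:
  assumes wf: "\<forall>m<M. wf_pomdp (C m)" and F: "relax_feasible T C M q D b tau1 tauo taut dl"
  shows "relax_obj T C M taut \<le> (\<Sum>t=1..T. \<Sum>m<M. \<Sum>s\<in>St (C m). \<Sum>a\<in>Ac (C m). \<Sum>s'\<in>St (C m). \<bar>rew (C m) s a s'\<bar>)"
  unfolding relax_obj_def
proof (intro sum_mono)
  fix t m s a s' assume t: "t \<in> {1..T}" and m: "m \<in> {..<M}" and h: "s \<in> St (C m)" "a \<in> Ac (C m)" "s' \<in> St (C m)"
  have w: "wf_pomdp (C m)" and Q: "QR T (C m) (tau1 m) (tauo m) (taut m) (dl m)"
    using wf F m unfolding relax_feasible_def by auto
  have "rew (C m) s a s' * taut m t s a s' \<le> \<bar>rew (C m) s a s'\<bar> * taut m t s a s'"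
    using QR_sas_nonneg[OF Q] t h by (intro mult_right_mono) auto
  also have "\<dots> \<le> \<bar>rew (C m) s a s'\<bar>"
    using QR_sas_le_1[OF w Q t h] by (intro mult_left_le) auto
  finally show "rew (C m) s a s' * taut m t s a s' \<le> \<bar>rew (C m) s a s'\<bar>" .
qed

lemma joint_simps:
  "St (joint C M q D b) = PiE {..<M} (\<lambda>m. St (C m))"
  "Ob (joint C M q D b) = PiE {..<M} (\<lambda>m. Ob (C m))"
  "Ac (joint C M q D b) = {a \<in> PiE {..<M} (\<lambda>m. Ac (C m)). \<forall>j<q. (\<Sum>m<M. D m (a m) j) \<le> b j}"
  "init (joint C M q D b) = (\<lambda>s. \<Prod>m<M. init (C m) (s m))"
  "emis (joint C M q D b) = (\<lambda>s ob. \<Prod>m<M. emis (C m) (s m) (ob m))"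
  "trans (joint C M q D b) = (\<lambda>s a s'. \<Prod>m<M. trans (C m) (s m) (a m) (s' m))"
  "rew (joint C M q D b) = (\<lambda>s a s'. \<Sum>m<M. rew (C m) (s m) (a m) (s' m))"
  by (simp_all add: joint_def)

lemma wf_pomdp_joint:
  assumes wf: "\<forall>m<M. wf_pomdp (C m)"
  shows "wf_pomdp (joint C M q D b)"
proof -
  have fin: "\<And>k. k < M \<Longrightarrow> finite (St (C k)) \<and> finite (Ob (C k)) \<and> finite (Ac (C k))"
    using wf by (auto simp: wf_pomdp_def)
  have "finite (PiE {..<M} (\<lambda>m. Ac (C m)))" by (rule finite_PiE) (auto simp: fin)
  then have fin_Ac: "finite (Ac (joint C M q D b))" by (auto simp: joint_simps intro: finite_subset)
  show ?thesis unfolding wf_pomdp_def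
  proof (intro conjI ballI)
    show "finite (St (joint C M q D b))" "finite (Ob (joint C M q D b))"
      by (auto simp: joint_simps fin intro!: finite_PiE)
    show "finite (Ac (joint C M q D b))" by (rule fin_Ac)
    show "(\<Sum>s\<in>St (joint C M q D b). init (joint C M q D b) s) = 1"
      using wf by (simp add: joint_simps, intro sum_PiE_prod_normalized) (auto simp: wf_pomdp_def)
    show "(\<Sum>ob\<in>Ob (joint C M q D b). emis (joint C M q D b) s ob) = 1"
      if "s \<in> St (joint C M q D b)" for s
      using wf that by (simp add: joint_simps, intro sum_PiE_prod_normalized)
        (auto simp: wf_pomdp_def PiE_iff)
    show "(\<Sum>s'\<in>St (joint C M q D b). trans (joint C M q D b) s a s') = 1"
      if "s \<in> St (joint C M q D b)" "a \<in> Ac (joint C M q D b)" for s a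
      using wf that by (simp add: joint_simps, intro sum_PiE_prod_normalized)
        (auto simp: wf_pomdp_def PiE_iff)
    show "init (joint C M q D b) s \<ge> 0" if "s \<in> St (joint C M q D b)" for s
      using wf that by (auto simp: joint_simps wf_pomdp_def PiE_iff intro!: prod_nonneg)
    show "emis (joint C M q D b) s ob \<ge> 0"
      if "s \<in> St (joint C M q D b)" "ob \<in> Ob (joint C M q D b)" for s ob
      using wf that by (auto simp: joint_simps wf_pomdp_def PiE_iff intro!: prod_nonneg)
    show "trans (joint C M q D b) s a s' \<ge> 0"
      if "s \<in> St (joint C M q D b)" "a \<in> Ac (joint C M q D b)" "s' \<in> St (joint C M q D b)" for s a s'
      using wf that by (auto simp: joint_simps wf_pomdp_def PiE_iff intro!: prod_nonneg)
  qed
qed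

section \<open>Occupation measures\<close>

text \<open>
  \<open>X t s o a\<close> and \<open>Y t s a s'\<close> play the role of the probabilities of \<open>(S\<^sub>t, O\<^sub>t, A\<^sub>t) = (s, o, a)\<close>
  and \<open>(S\<^sub>t, A\<^sub>t, S\<^sub>t\<^sub>+\<^sub>1) = (s, a, s')\<close>; \<open>X_emis\<close> says that the observation is drawn from the
  emission law of the current state.
\<close>

locale occupation =
  fixes P :: "('s, 'o, 'a) pomdp" and T :: nat
    and X :: "nat \<Rightarrow> 's \<Rightarrow> 'o \<Rightarrow> 'a \<Rightarrow> real"
    and Y :: "nat \<Rightarrow> 's \<Rightarrow> 'a \<Rightarrow> 's \<Rightarrow> real"
  assumes wf: "wf_pomdp P"
    and X_nonneg: "t \<in> {1..T} \<Longrightarrow> s \<in> St P \<Longrightarrow> o' \<in> Ob P \<Longrightarrow> a \<in> Ac P \<Longrightarrow> X t s o' a \<ge> 0"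
    and Y_nonneg: "t \<in> {1..T} \<Longrightarrow> s \<in> St P \<Longrightarrow> a \<in> Ac P \<Longrightarrow> s' \<in> St P \<Longrightarrow> Y t s a s' \<ge> 0"
    and X_flow: "t \<in> {1..T} \<Longrightarrow> s \<in> St P \<Longrightarrow> (\<Sum>o'\<in>Ob P. \<Sum>a\<in>Ac P. X t s o' a) = nuQ P (init P) Y t s"
    and Y_X_balance:
      "t \<in> {1..T} \<Longrightarrow> s \<in> St P \<Longrightarrow> a \<in> Ac P \<Longrightarrow> (\<Sum>s'\<in>St P. Y t s a s') = (\<Sum>o'\<in>Ob P. X t s o' a)"
    and Y_trans: "t \<in> {1..T} \<Longrightarrow> s \<in> St P \<Longrightarrow> a \<in> Ac P \<Longrightarrow> s' \<in> St P \<Longrightarrow>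
      Y t s a s' = trans P s a s' * (\<Sum>sb\<in>St P. Y t s a sb)"
    and X_emis: "t \<in> {1..T} \<Longrightarrow> s \<in> St P \<Longrightarrow> o' \<in> Ob P \<Longrightarrow>
      (\<Sum>a\<in>Ac P. X t s o' a) = emis P s o' * nuQ P (init P) Y t s"
begin

lemma nuQ_nonneg:
  assumes "t \<in> {1..T}" "s \<in> St P"
  shows "nuQ P (init P) Y t s \<ge> 0"
proof (cases "t = 1")
  case True
  then show ?thesis using wf assms by (simp add: nuQ_def wf_pomdp_def)
next
  case False
  then show ?thesis using assms by (auto simp: nuQ_def intro!: sum_nonneg Y_nonneg)
qed

lemma sum_nuQ:
  assumes "t \<in> {1..T}"
  shows "(\<Sum>s\<in>St P. nuQ P (init P) Y t s) = 1"
  by (rule sum_nuQ_eq_1[OF wf, where tauo = X and T = T]) (use assms X_flow Y_X_balance in auto)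

lemma mdp_feasible_Y: "mdp_feasible T P (init P) Y"
  unfolding mdp_feasible_def
proof (intro conjI ballI)
  fix t s assume t: "t \<in> {1..T}" and s: "s \<in> St P"
  have "(\<Sum>a\<in>Ac P. \<Sum>s'\<in>St P. Y t s a s') = (\<Sum>o'\<in>Ob P. \<Sum>a\<in>Ac P. X t s o' a)"
    using t s by (simp add: Y_X_balance sum.swap[of _ "Ac P"])
  then show "(\<Sum>a\<in>Ac P. \<Sum>s'\<in>St P. Y t s a s') =
      (if t = 1 then init P s else \<Sum>s''\<in>St P. \<Sum>a''\<in>Ac P. Y (t - 1) s'' a'' s)"
    using X_flow[OF t s] by (simp add: nuQ_def)
qed (use wf Y_nonneg Y_trans in \<open>auto simp: wf_pomdp_def\<close>)

end

lemma occupation_of_mdp_feasible: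
  assumes wf: "wf_pomdp P" and feas: "mdp_feasible T P mu1 mu"
  shows "occupation P T (\<lambda>t s o' a. emis P s o' * (\<Sum>s'\<in>St P. mu t s a s')) mu"
proof -
  have emis: "\<And>s o'. s \<in> St P \<Longrightarrow> o' \<in> Ob P \<Longrightarrow> emis P s o' \<ge> 0"
    "\<And>s. s \<in> St P \<Longrightarrow> (\<Sum>o'\<in>Ob P. emis P s o') = 1"
    using wf unfolding wf_pomdp_def by simp_all
  have mu1: "\<forall>s\<in>St P. mu1 s \<ge> 0 \<and> mu1 s = init P s"
    and mu_flow: "\<forall>t\<in>{1..T}. \<forall>s\<in>St P. (\<Sum>a\<in>Ac P. \<Sum>s'\<in>St P. mu t s a s') =
      (if t = 1 then mu1 s else (\<Sum>s''\<in>St P. \<Sum>a''\<in>Ac P. mu (t - 1) s'' a'' s))"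
    and mu_nonneg: "\<forall>t\<in>{1..T}. \<forall>s\<in>St P. \<forall>a\<in>Ac P. \<forall>s'\<in>St P. mu t s a s' \<ge> 0"
    and mu_trans: "\<forall>t\<in>{1..T}. \<forall>s\<in>St P. \<forall>a\<in>Ac P. \<forall>s'\<in>St P.
      mu t s a s' = trans P s a s' * (\<Sum>sb\<in>St P. mu t s a sb)"
    using feas unfolding mdp_feasible_def by blast+
  have flow: "(\<Sum>a\<in>Ac P. \<Sum>s'\<in>St P. mu t s a s') = nuQ P (init P) mu t s"
    if "t \<in> {1..T}" "s \<in> St P" for t s
    using mu1 mu_flow that by (simp add: nuQ_def)
  show ?thesis
  proof
    show "(\<Sum>o'\<in>Ob P. \<Sum>a\<in>Ac P. emis P s o' * (\<Sum>s'\<in>St P. mu t s a s')) = nuQ P (init P) mu t s"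
      if "t \<in> {1..T}" "s \<in> St P" for t s
      using emis(2)[of s] flow[OF that] that
      by (simp add: sum_distrib_left[symmetric] sum_distrib_right[symmetric])
    show "(\<Sum>a\<in>Ac P. emis P s o' * (\<Sum>s'\<in>St P. mu t s a s')) = emis P s o' * nuQ P (init P) mu t s"
      if "t \<in> {1..T}" "s \<in> St P" "o' \<in> Ob P" for t s o'
      using flow[of t s] that by (simp add: sum_distrib_left[symmetric])
    show "(\<Sum>s'\<in>St P. mu t s a s') = (\<Sum>o'\<in>Ob P. emis P s o' * (\<Sum>s'\<in>St P. mu t s a s'))"
      if "s \<in> St P" for t s a
      using emis(2)[OF that] by (simp add: sum_distrib_right[symmetric])
    show "mu t s a s' = trans P s a s' * (\<Sum>sb\<in>St P. mu t s a sb)"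
      if "t \<in> {1..T}" "s \<in> St P" "a \<in> Ac P" "s' \<in> St P" for t s a s'
      using mu_trans that by blast
  qed (use wf mu_nonneg emis in \<open>auto intro!: mult_nonneg_nonneg sum_nonneg\<close>)
qed

text \<open>
  \<open>K t s' a' o a\<close> stands for the probability of \<open>(S\<^sub>t\<^sub>-\<^sub>1, A\<^sub>t\<^sub>-\<^sub>1) = (s', a')\<close> followed by the
  choice of \<open>a\<close> after observing \<open>o\<close> at time \<open>t\<close>.
\<close>

locale occupation_cuts = occupation +
  fixes K :: "nat \<Rightarrow> 's \<Rightarrow> 'a \<Rightarrow> 'o \<Rightarrow> 'a \<Rightarrow> real"
  assumes K_nonneg:
      "t \<in> {2..T} \<Longrightarrow> s' \<in> St P \<Longrightarrow> a' \<in> Ac P \<Longrightarrow> o' \<in> Ob P \<Longrightarrow> a \<in> Ac P \<Longrightarrow> K t s' a' o' a \<ge> 0"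
    and K_X: "t \<in> {2..T} \<Longrightarrow> s \<in> St P \<Longrightarrow> o' \<in> Ob P \<Longrightarrow> a \<in> Ac P \<Longrightarrow>
      (\<Sum>s'\<in>St P. \<Sum>a'\<in>Ac P. emis P s o' * trans P s' a' s * K t s' a' o' a) = X t s o' a"
    and K_Y: "t \<in> {2..T} \<Longrightarrow> s' \<in> St P \<Longrightarrow> a' \<in> Ac P \<Longrightarrow> o' \<in> Ob P \<Longrightarrow>
      (\<Sum>a\<in>Ac P. K t s' a' o' a) = (\<Sum>sb\<in>St P. Y (t - 1) s' a' sb)"

section \<open>Histories of a policy\<close>

definition traj_sum :: "('s,'o,'a) pomdp \<Rightarrow> nat \<Rightarrow> ('s list \<Rightarrow> 'o list \<Rightarrow> 'a list \<Rightarrow> real) \<Rightarrow> real" where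
  "traj_sum P k F = (\<Sum>ss\<in>lists_len (St P) (Suc k). \<Sum>os\<in>lists_len (Ob P) k. \<Sum>as\<in>lists_len (Ac P) k. F ss os as)"

lemma sum_lists_len_Suc:
  fixes f :: "'x list \<Rightarrow> real"
  assumes "finite A"
  shows "(\<Sum>xs\<in>lists_len A (Suc n). f xs) = (\<Sum>xs\<in>lists_len A n. \<Sum>x\<in>A. f (xs @ [x]))"
proof -
  have eq: "lists_len A (Suc n) = (\<lambda>(xs, x). xs @ [x]) ` (lists_len A n \<times> A)"
  proof (rule set_eqI, rule iffI)
    fix ys assume "ys \<in> lists_len A (Suc n)"
    then have "ys \<noteq> []" "set ys \<subseteq> A" "length ys = Suc n" by (auto simp: lists_len_def)
    then show "ys \<in> (\<lambda>(xs, x). xs @ [x]) ` (lists_len A n \<times> A)"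
      by (intro image_eqI[where x="(butlast ys, last ys)"])
         (use in_set_butlastD in \<open>fastforce simp: lists_len_def\<close>)+
  qed (auto simp: lists_len_def)
  have inj: "inj_on (\<lambda>(xs, x). xs @ [x]) (lists_len A n \<times> A)"
    by (auto simp: inj_on_def)
  have "(\<Sum>xs\<in>lists_len A (Suc n). f xs) = (\<Sum>p\<in>lists_len A n \<times> A. f ((\<lambda>(xs, x). xs @ [x]) p))"
    unfolding eq by (rule sum.reindex[OF inj, unfolded o_def])
  also have "\<dots> = (\<Sum>(xs, x)\<in>lists_len A n \<times> A. f (xs @ [x]))"
    by (simp add: split_def)
  also have "\<dots> = (\<Sum>xs\<in>lists_len A n. \<Sum>x\<in>A. f (xs @ [x]))"
    by (rule sum.cartesian_product[symmetric])
  finally show ?thesis .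
qed

lemma traj_sum_Suc:
  assumes "finite (St P)" "finite (Ob P)" "finite (Ac P)"
  shows "traj_sum P (Suc k) F = traj_sum P k (\<lambda>ss os as. \<Sum>s\<in>St P. \<Sum>ob\<in>Ob P. \<Sum>a\<in>Ac P. F (ss @ [s]) (os @ [ob]) (as @ [a]))"
proof -
  have "traj_sum P (Suc k) F = (\<Sum>ss\<in>lists_len (St P) (Suc k). \<Sum>s\<in>St P. \<Sum>os\<in>lists_len (Ob P) k. \<Sum>ob\<in>Ob P.
          \<Sum>as\<in>lists_len (Ac P) k. \<Sum>a\<in>Ac P. F (ss @ [s]) (os @ [ob]) (as @ [a]))"
    unfolding traj_sum_def using assms by (simp add: sum_lists_len_Suc)
  also have "\<dots> = (\<Sum>ss\<in>lists_len (St P) (Suc k). \<Sum>os\<in>lists_len (Ob P) k. \<Sum>as\<in>lists_len (Ac P) k.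
       \<Sum>s\<in>St P. \<Sum>ob\<in>Ob P. \<Sum>a\<in>Ac P. F (ss @ [s]) (os @ [ob]) (as @ [a]))"
  proof (rule sum.cong[OF refl])
    fix ss
    have "(\<Sum>s\<in>St P. \<Sum>os\<in>lists_len (Ob P) k. \<Sum>ob\<in>Ob P. \<Sum>as\<in>lists_len (Ac P) k. \<Sum>a\<in>Ac P. F (ss @ [s]) (os @ [ob]) (as @ [a]))
        = (\<Sum>os\<in>lists_len (Ob P) k. \<Sum>s\<in>St P. \<Sum>ob\<in>Ob P. \<Sum>as\<in>lists_len (Ac P) k. \<Sum>a\<in>Ac P. F (ss @ [s]) (os @ [ob]) (as @ [a]))"
      by (rule sum.swap)
    also have "\<dots> = (\<Sum>os\<in>lists_len (Ob P) k. \<Sum>as\<in>lists_len (Ac P) k. \<Sum>s\<in>St P. \<Sum>ob\<in>Ob P. \<Sum>a\<in>Ac P. F (ss @ [s]) (os @ [ob]) (as @ [a]))"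
    proof (rule sum.cong[OF refl])
      fix os
      have "(\<Sum>s\<in>St P. \<Sum>ob\<in>Ob P. \<Sum>as\<in>lists_len (Ac P) k. \<Sum>a\<in>Ac P. F (ss @ [s]) (os @ [ob]) (as @ [a]))
          = (\<Sum>s\<in>St P. \<Sum>as\<in>lists_len (Ac P) k. \<Sum>ob\<in>Ob P. \<Sum>a\<in>Ac P. F (ss @ [s]) (os @ [ob]) (as @ [a]))"
        by (rule sum.cong[OF refl], rule sum.swap)
      also have "\<dots> = (\<Sum>as\<in>lists_len (Ac P) k. \<Sum>s\<in>St P. \<Sum>ob\<in>Ob P. \<Sum>a\<in>Ac P. F (ss @ [s]) (os @ [ob]) (as @ [a]))"
        by (rule sum.swap)
      finally show "(\<Sum>s\<in>St P. \<Sum>ob\<in>Ob P. \<Sum>as\<in>lists_len (Ac P) k. \<Sum>a\<in>Ac P. F (ss @ [s]) (os @ [ob]) (as @ [a]))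
          = (\<Sum>as\<in>lists_len (Ac P) k. \<Sum>s\<in>St P. \<Sum>ob\<in>Ob P. \<Sum>a\<in>Ac P. F (ss @ [s]) (os @ [ob]) (as @ [a]))" .
    qed
    finally show "(\<Sum>s\<in>St P. \<Sum>os\<in>lists_len (Ob P) k. \<Sum>ob\<in>Ob P. \<Sum>as\<in>lists_len (Ac P) k. \<Sum>a\<in>Ac P. F (ss @ [s]) (os @ [ob]) (as @ [a]))
        = (\<Sum>os\<in>lists_len (Ob P) k. \<Sum>as\<in>lists_len (Ac P) k. \<Sum>s\<in>St P. \<Sum>ob\<in>Ob P. \<Sum>a\<in>Ac P. F (ss @ [s]) (os @ [ob]) (as @ [a]))" .
  qed
  finally show ?thesis unfolding traj_sum_def .
qed

lemma traj_prob_snoc: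
  assumes "length ss = Suc k" "length os = k" "length as = k"
  shows "traj_prob (Suc k) P pol (ss @ [s]) (os @ [ob]) (as @ [a]) =
         traj_prob k P pol ss os as * (emis P (ss ! k) ob * pol (Suc k) (os @ [ob], as) a * trans P (ss ! k) a s)"
proof -
  have "(\<Prod>t<k. emis P ((ss @ [s]) ! t) ((os @ [ob]) ! t) * pol (Suc t) (take (Suc t) (os @ [ob]), take t (as @ [a])) ((as @ [a]) ! t)
             * trans P ((ss @ [s]) ! t) ((as @ [a]) ! t) ((ss @ [s]) ! Suc t))
      = (\<Prod>t<k. emis P (ss ! t) (os ! t) * pol (Suc t) (take (Suc t) os, take t as) (as ! t)
             * trans P (ss ! t) (as ! t) (ss ! Suc t))"
    by (rule prod.cong) (use assms in \<open>auto simp: nth_append\<close>)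
  moreover have "(ss @ [s]) ! 0 = ss ! 0" using assms by (simp add: nth_append)
  ultimately show ?thesis using assms
    by (simp add: traj_prob_def nth_append mult_ac)
qed

lemma lists_len_0[simp]: "lists_len A 0 = {[]}"
  by (auto simp: lists_len_def)

lemma lists_len_nth: "xs \<in> lists_len A n \<Longrightarrow> i < n \<Longrightarrow> xs ! i \<in> A"
  by (auto simp: lists_len_def)

lemma traj_sum_cong:
  assumes "\<And>ss os as. ss \<in> lists_len (St P) (Suc k) \<Longrightarrow> os \<in> lists_len (Ob P) k \<Longrightarrow> as \<in> lists_len (Ac P) k
     \<Longrightarrow> F ss os as = F' ss os as"
  shows "traj_sum P k F = traj_sum P k F'"
  unfolding traj_sum_def using assms by (intro sum.cong refl) auto

lemma traj_sum_cmult: "traj_sum P k (\<lambda>ss os as. c * F ss os as) = c * traj_sum P k F"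
  unfolding traj_sum_def by (simp add: sum_distrib_left)

lemma traj_sum_sum: "traj_sum P k (\<lambda>ss os as. \<Sum>x\<in>A. F x ss os as) = (\<Sum>x\<in>A. traj_sum P k (F x))"
proof -
  have "traj_sum P k (\<lambda>ss os as. \<Sum>x\<in>A. F x ss os as) =
     (\<Sum>ss\<in>lists_len (St P) (Suc k). \<Sum>os\<in>lists_len (Ob P) k. \<Sum>x\<in>A. \<Sum>as\<in>lists_len (Ac P) k. F x ss os as)"
    unfolding traj_sum_def by (intro sum.cong refl sum.swap)
  also have "\<dots> = (\<Sum>ss\<in>lists_len (St P) (Suc k). \<Sum>x\<in>A. \<Sum>os\<in>lists_len (Ob P) k. \<Sum>as\<in>lists_len (Ac P) k. F x ss os as)"
    by (intro sum.cong refl sum.swap)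
  also have "\<dots> = (\<Sum>x\<in>A. traj_sum P k (F x))"
    unfolding traj_sum_def by (rule sum.swap)
  finally show ?thesis .
qed

lemma traj_sum_nonneg:
  assumes "\<And>ss os as. ss \<in> lists_len (St P) (Suc k) \<Longrightarrow> os \<in> lists_len (Ob P) k \<Longrightarrow> as \<in> lists_len (Ac P) k
     \<Longrightarrow> F ss os as \<ge> 0"
  shows "traj_sum P k F \<ge> 0"
  unfolding traj_sum_def using assms by (intro sum_nonneg) auto

lemma sum_kernel_step:
  fixes c :: real
  assumes "finite S" "finite Os" "finite A"
    and e: "(\<Sum>ob\<in>Os. e ob) = 1" and p: "\<And>ob. ob \<in> Os \<Longrightarrow> (\<Sum>a\<in>A. p ob a) = 1"
    and tr: "\<And>a. a \<in> A \<Longrightarrow> (\<Sum>s\<in>S. tr a s) = 1"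
  shows "(\<Sum>s\<in>S. \<Sum>ob\<in>Os. \<Sum>a\<in>A. c * (e ob * p ob a * tr a s)) = c"
proof -
  have "(\<Sum>s\<in>S. \<Sum>ob\<in>Os. \<Sum>a\<in>A. c * (e ob * p ob a * tr a s)) = (\<Sum>ob\<in>Os. \<Sum>s\<in>S. \<Sum>a\<in>A. c * (e ob * p ob a * tr a s))"
    by (rule sum.swap)
  also have "\<dots> = (\<Sum>ob\<in>Os. \<Sum>a\<in>A. \<Sum>s\<in>S. c * (e ob * p ob a * tr a s))"
    by (intro sum.cong refl sum.swap)
  also have "\<dots> = (\<Sum>ob\<in>Os. \<Sum>a\<in>A. c * e ob * p ob a * (\<Sum>s\<in>S. tr a s))"
    by (simp add: sum_distrib_left mult_ac)
  also have "\<dots> = (\<Sum>ob\<in>Os. \<Sum>a\<in>A. c * e ob * p ob a)"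
    using tr by simp
  also have "\<dots> = (\<Sum>ob\<in>Os. c * e ob * (\<Sum>a\<in>A. p ob a))"
    by (simp add: sum_distrib_left mult_ac)
  also have "\<dots> = (\<Sum>ob\<in>Os. c * e ob)"
    using p by simp
  also have "\<dots> = c" using e by (simp add: sum_distrib_left[symmetric])
  finally show ?thesis .
qed

locale policy_run =
  fixes P :: "('s,'o,'a) pomdp" and pol :: "nat \<Rightarrow> 'o list \<times> 'a list \<Rightarrow> 'a \<Rightarrow> real" and T :: nat
  assumes wf: "wf_pomdp P" and pv: "policy_valid T P pol"
begin

lemma fin_St: "finite (St P)" and fin_Ob: "finite (Ob P)" and fin_Ac: "finite (Ac P)"
  using wf by (auto simp: wf_pomdp_def)

lemma init_nonneg: "s \<in> St P \<Longrightarrow> init P s \<ge> 0"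
  and emis_nonneg: "s \<in> St P \<Longrightarrow> ob \<in> Ob P \<Longrightarrow> emis P s ob \<ge> 0"
  and sum_emis: "s \<in> St P \<Longrightarrow> (\<Sum>ob\<in>Ob P. emis P s ob) = 1"
  and trans_nonneg: "s \<in> St P \<Longrightarrow> a \<in> Ac P \<Longrightarrow> s' \<in> St P \<Longrightarrow> trans P s a s' \<ge> 0"
  and sum_trans: "s \<in> St P \<Longrightarrow> a \<in> Ac P \<Longrightarrow> (\<Sum>s'\<in>St P. trans P s a s') = 1"
  using wf by (auto simp: wf_pomdp_def)

lemma pol_nonneg: "1 \<le> t \<Longrightarrow> t \<le> T \<Longrightarrow> a \<in> Ac P \<Longrightarrow> pol t h a \<ge> 0"
  and sum_pol: "1 \<le> t \<Longrightarrow> t \<le> T \<Longrightarrow> (\<Sum>a\<in>Ac P. pol t h a) = 1"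
  using pv unfolding policy_valid_def by (meson atLeastAtMost_iff)+

lemma traj_prob_nonneg:
  assumes "k \<le> T" "ss \<in> lists_len (St P) (Suc k)" "os \<in> lists_len (Ob P) k" "as \<in> lists_len (Ac P) k"
  shows "traj_prob k P pol ss os as \<ge> 0"
proof -
  have "\<And>t. t < Suc k \<Longrightarrow> ss ! t \<in> St P" "\<And>t. t < k \<Longrightarrow> os ! t \<in> Ob P" "\<And>t. t < k \<Longrightarrow> as ! t \<in> Ac P"
    using assms by (auto intro: lists_len_nth)
  then show ?thesis unfolding traj_prob_def using assms
    by (intro mult_nonneg_nonneg prod_nonneg init_nonneg emis_nonneg trans_nonneg pol_nonneg) auto
qed

lemma traj_sum_Suc': "traj_sum P (Suc k) F = traj_sum P k (\<lambda>ss os as. \<Sum>s\<in>St P. \<Sum>ob\<in>Ob P. \<Sum>a\<in>Ac P. F (ss @ [s]) (os @ [ob]) (as @ [a]))"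
  by (rule traj_sum_Suc[OF fin_St fin_Ob fin_Ac])

lemma traj_sum_truncate:
  assumes "k \<le> n" "n \<le> T"
  shows "traj_sum P n (\<lambda>ss os as. traj_prob n P pol ss os as * f (take (Suc k) ss) (take k os) (take k as))
       = traj_sum P k (\<lambda>ss os as. traj_prob k P pol ss os as * f ss os as)"
  using assms
proof (induction n)
  case 0
  then have k0: "k = 0" by simp
  show ?case unfolding k0 by (intro traj_sum_cong) (auto simp: lists_len_def)
next
  case (Suc n)
  show ?case
  proof (cases "k = Suc n")
    case True
    show ?thesis unfolding True by (intro traj_sum_cong) (auto simp: lists_len_def)
  next
    case False
    then have kn: "k \<le> n" using Suc by auto
    have "traj_sum P (Suc n) (\<lambda>ss os as. traj_prob (Suc n) P pol ss os as * f (take (Suc k) ss) (take k os) (take k as))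
      = traj_sum P n (\<lambda>ss os as. \<Sum>s\<in>St P. \<Sum>ob\<in>Ob P. \<Sum>a\<in>Ac P.
          (traj_prob n P pol ss os as * f (take (Suc k) ss) (take k os) (take k as)) *
           (emis P (ss ! n) ob * pol (Suc n) (os @ [ob], as) a * trans P (ss ! n) a s))"
      unfolding traj_sum_Suc'
      by (intro traj_sum_cong sum.cong refl) (use kn in \<open>auto simp: traj_prob_snoc lists_len_def\<close>)
    also have "\<dots> = traj_sum P n (\<lambda>ss os as. traj_prob n P pol ss os as * f (take (Suc k) ss) (take k os) (take k as))"
    proof (intro traj_sum_cong sum_kernel_step fin_St fin_Ob fin_Ac)
      fix ss os as assume h: "ss \<in> lists_len (St P) (Suc n)" "os \<in> lists_len (Ob P) n" "as \<in> lists_len (Ac P) n"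
      then have sn: "ss ! n \<in> St P" by (auto intro: lists_len_nth)
      show "(\<Sum>ob\<in>Ob P. emis P (ss ! n) ob) = 1" using sn sum_emis by auto
      show "(\<Sum>a\<in>Ac P. pol (Suc n) (os @ [ob], as) a) = 1" for ob using Suc.prems sum_pol by auto
      show "(\<Sum>s\<in>St P. trans P (ss ! n) a s) = 1" if "a \<in> Ac P" for a using sn that sum_trans by auto
    qed
    also have "\<dots> = traj_sum P k (\<lambda>ss os as. traj_prob k P pol ss os as * f ss os as)"
      using Suc kn by auto
    finally show ?thesis .
  qed
qed

lemma traj_sum_select_state:
  "traj_sum P i (\<lambda>ss os as. \<Sum>\<sigma>\<in>St P. if ss ! i = \<sigma> then H \<sigma> ss os as else 0) = traj_sum P i (\<lambda>ss os as. H (ss ! i) ss os as)"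
proof (rule traj_sum_cong)
  fix ss os as assume "ss \<in> lists_len (St P) (Suc i)"
  then have "ss ! i \<in> St P" by (auto intro: lists_len_nth)
  then show "(\<Sum>\<sigma>\<in>St P. if ss ! i = \<sigma> then H \<sigma> ss os as else 0) = H (ss ! i) ss os as"
    using fin_St by simp
qed

text \<open>
  Lists are indexed from \<open>0\<close>, so \<open>i\<close> refers to step \<open>i + 1\<close>: \<open>state_occ i \<sigma>\<close> is the probability
  of \<open>S = \<sigma>\<close>, \<open>emis P \<sigma> \<omega> * obs_act_occ i \<sigma> \<omega> \<alpha>\<close> that of \<open>(S, O, A) = (\<sigma>, \<omega>, \<alpha>)\<close>, and
  \<open>two_step_occ j \<sigma>' \<alpha>' \<omega> \<alpha>\<close> that of \<open>(S, A) = (\<sigma>', \<alpha>')\<close> followed by the choice of \<open>\<alpha>\<close> after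
  observing \<open>\<omega>\<close> at the next step.
\<close>

definition state_occ where
  "state_occ i \<sigma> = traj_sum P i (\<lambda>ss os as. if ss ! i = \<sigma> then traj_prob i P pol ss os as else 0)"
definition obs_act_occ where
  "obs_act_occ i \<sigma> \<omega> \<alpha> = traj_sum P i (\<lambda>ss os as. if ss ! i = \<sigma> then traj_prob i P pol ss os as * pol (Suc i) (os @ [\<omega>], as) \<alpha> else 0)"
definition two_step_occ where
  "two_step_occ j \<sigma>' \<alpha>' \<omega> \<alpha> = traj_sum P j (\<lambda>ss os as. if ss ! j = \<sigma>' then
     (\<Sum>\<omega>'\<in>Ob P. traj_prob j P pol ss os as * emis P \<sigma>' \<omega>' * pol (Suc j) (os @ [\<omega>'], as) \<alpha>'
        * pol (Suc (Suc j)) (os @ [\<omega>', \<omega>], as @ [\<alpha>']) \<alpha>) else 0)"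

lemma obs_act_occ_nonneg: "i < T \<Longrightarrow> \<alpha> \<in> Ac P \<Longrightarrow> obs_act_occ i \<sigma> \<omega> \<alpha> \<ge> 0"
  unfolding obs_act_occ_def
  by (intro traj_sum_nonneg) (auto intro!: mult_nonneg_nonneg traj_prob_nonneg pol_nonneg)

lemma two_step_occ_nonneg: "Suc j < T \<Longrightarrow> \<alpha>' \<in> Ac P \<Longrightarrow> \<alpha> \<in> Ac P \<Longrightarrow> two_step_occ j \<sigma>' \<alpha>' \<omega> \<alpha> \<ge> 0"
  unfolding two_step_occ_def
proof (intro traj_sum_nonneg)
  fix ss os as assume h: "Suc j < T" "\<alpha>' \<in> Ac P" "\<alpha> \<in> Ac P" "ss \<in> lists_len (St P) (Suc j)"
    "os \<in> lists_len (Ob P) j" "as \<in> lists_len (Ac P) j"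
  then have "ss ! j \<in> St P" by (auto intro: lists_len_nth)
  then show "0 \<le> (if ss ! j = \<sigma>' then
     (\<Sum>\<omega>'\<in>Ob P. traj_prob j P pol ss os as * emis P \<sigma>' \<omega>' * pol (Suc j) (os @ [\<omega>'], as) \<alpha>'
        * pol (Suc (Suc j)) (os @ [\<omega>', \<omega>], as @ [\<alpha>']) \<alpha>) else 0)"
    using h by (auto intro!: sum_nonneg mult_nonneg_nonneg traj_prob_nonneg pol_nonneg emis_nonneg)
qed

lemma sum_obs_act_occ: "i < T \<Longrightarrow> (\<Sum>\<alpha>\<in>Ac P. obs_act_occ i \<sigma> \<omega> \<alpha>) = state_occ i \<sigma>"
  unfolding obs_act_occ_def state_occ_def traj_sum_sum[symmetric]
  by (intro traj_sum_cong) (simp add: sum_if_const sum_distrib_left[symmetric] sum_pol)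

lemma state_occ_0: "\<sigma> \<in> St P \<Longrightarrow> state_occ 0 \<sigma> = init P \<sigma>"
  unfolding state_occ_def traj_sum_def using fin_St
  by (simp add: sum_lists_len_Suc traj_prob_def, subst (1 2) lists_len_0, simp add: traj_prob_def)

lemma state_occ_Suc:
  assumes "i < T" "\<sigma>' \<in> St P"
  shows "state_occ (Suc i) \<sigma>' = (\<Sum>\<sigma>\<in>St P. \<Sum>\<alpha>\<in>Ac P. \<Sum>\<omega>\<in>Ob P. trans P \<sigma> \<alpha> \<sigma>' * emis P \<sigma> \<omega> * obs_act_occ i \<sigma> \<omega> \<alpha>)"
proof -
  have "state_occ (Suc i) \<sigma>' = traj_sum P i (\<lambda>ss os as. \<Sum>ob\<in>Ob P. \<Sum>a\<in>Ac P.
      traj_prob i P pol ss os as * (emis P (ss ! i) ob * pol (Suc i) (os @ [ob], as) a * trans P (ss ! i) a \<sigma>'))"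
    unfolding state_occ_def traj_sum_Suc'
  proof (rule traj_sum_cong)
    fix ss os as assume h: "ss \<in> lists_len (St P) (Suc i)" "os \<in> lists_len (Ob P) i" "as \<in> lists_len (Ac P) i"
    then have l: "length ss = Suc i" "length os = i" "length as = i" by (auto simp: lists_len_def)
    show "(\<Sum>s\<in>St P. \<Sum>ob\<in>Ob P. \<Sum>a\<in>Ac P. if (ss @ [s]) ! Suc i = \<sigma>' then traj_prob (Suc i) P pol (ss @ [s]) (os @ [ob]) (as @ [a]) else 0)
      = (\<Sum>ob\<in>Ob P. \<Sum>a\<in>Ac P. traj_prob i P pol ss os as * (emis P (ss ! i) ob * pol (Suc i) (os @ [ob], as) a * trans P (ss ! i) a \<sigma>'))"
      using l assms fin_St by (simp add: traj_prob_snoc nth_append sum_if_const)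
  qed
  also have "\<dots> = (\<Sum>\<sigma>\<in>St P. \<Sum>\<alpha>\<in>Ac P. \<Sum>\<omega>\<in>Ob P. trans P \<sigma> \<alpha> \<sigma>' * emis P \<sigma> \<omega> * obs_act_occ i \<sigma> \<omega> \<alpha>)"
    unfolding obs_act_occ_def
    by (simp only: traj_sum_cmult[symmetric] traj_sum_sum[symmetric],
        simp only: mult_if_zero sum_if_const traj_sum_select_state)
      (rule traj_sum_cong, subst sum.swap, simp add: mult_ac)
  finally show ?thesis .
qed

lemma obs_act_occ_Suc:
  assumes "Suc j < T" "\<sigma> \<in> St P"
  shows "obs_act_occ (Suc j) \<sigma> \<omega> \<alpha> = (\<Sum>\<sigma>'\<in>St P. \<Sum>\<alpha>'\<in>Ac P. trans P \<sigma>' \<alpha>' \<sigma> * two_step_occ j \<sigma>' \<alpha>' \<omega> \<alpha>)"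
proof -
  have "obs_act_occ (Suc j) \<sigma> \<omega> \<alpha> = traj_sum P j (\<lambda>ss os as. \<Sum>ob\<in>Ob P. \<Sum>a\<in>Ac P.
      traj_prob j P pol ss os as * (emis P (ss ! j) ob * pol (Suc j) (os @ [ob], as) a * trans P (ss ! j) a \<sigma>)
        * pol (Suc (Suc j)) (os @ [ob, \<omega>], as @ [a]) \<alpha>)"
    unfolding obs_act_occ_def traj_sum_Suc'
  proof (rule traj_sum_cong)
    fix ss os as assume h: "ss \<in> lists_len (St P) (Suc j)" "os \<in> lists_len (Ob P) j" "as \<in> lists_len (Ac P) j"
    then have l: "length ss = Suc j" "length os = j" "length as = j" by (auto simp: lists_len_def)
    show "(\<Sum>s\<in>St P. \<Sum>ob\<in>Ob P. \<Sum>a\<in>Ac P. if (ss @ [s]) ! Suc j = \<sigma> then traj_prob (Suc j) P pol (ss @ [s]) (os @ [ob]) (as @ [a])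
          * pol (Suc (Suc j)) ((os @ [ob]) @ [\<omega>], as @ [a]) \<alpha> else 0)
      = (\<Sum>ob\<in>Ob P. \<Sum>a\<in>Ac P. traj_prob j P pol ss os as * (emis P (ss ! j) ob * pol (Suc j) (os @ [ob], as) a * trans P (ss ! j) a \<sigma>)
        * pol (Suc (Suc j)) (os @ [ob, \<omega>], as @ [a]) \<alpha>)"
      using l assms fin_St by (simp add: traj_prob_snoc nth_append sum_if_const)
  qed
  also have "\<dots> = (\<Sum>\<sigma>'\<in>St P. \<Sum>\<alpha>'\<in>Ac P. trans P \<sigma>' \<alpha>' \<sigma> * two_step_occ j \<sigma>' \<alpha>' \<omega> \<alpha>)"
    unfolding two_step_occ_def
    by (simp only: traj_sum_cmult[symmetric] traj_sum_sum[symmetric],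
        simp only: mult_if_zero sum_if_const traj_sum_select_state)
      (rule traj_sum_cong, simp add: sum_distrib_left, subst sum.swap, simp add: mult_ac)
  finally show ?thesis .
qed

lemma sum_two_step_occ:
  assumes "Suc j < T"
  shows "(\<Sum>\<alpha>\<in>Ac P. two_step_occ j \<sigma>' \<alpha>' \<omega> \<alpha>) = (\<Sum>\<omega>'\<in>Ob P. emis P \<sigma>' \<omega>' * obs_act_occ j \<sigma>' \<omega>' \<alpha>')"
  unfolding two_step_occ_def obs_act_occ_def
proof (simp only: traj_sum_cmult[symmetric] traj_sum_sum[symmetric], rule traj_sum_cong)
  fix ss :: "'s list" and os :: "'o list" and as :: "'a list"
  have sum_pol_next: "\<And>h. (\<Sum>\<alpha>\<in>Ac P. pol (Suc (Suc j)) h \<alpha>) = 1"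
    using sum_pol[of "Suc (Suc j)"] assms by simp
  show "(\<Sum>\<alpha>\<in>Ac P. if ss ! j = \<sigma>' then \<Sum>\<omega>'\<in>Ob P. traj_prob j P pol ss os as * emis P \<sigma>' \<omega>' *
        pol (Suc j) (os @ [\<omega>'], as) \<alpha>' * pol (Suc (Suc j)) (os @ [\<omega>', \<omega>], as @ [\<alpha>']) \<alpha> else 0) =
      (\<Sum>\<omega>'\<in>Ob P. emis P \<sigma>' \<omega>' * (if ss ! j = \<sigma>' then
        traj_prob j P pol ss os as * pol (Suc j) (os @ [\<omega>'], as) \<alpha>' else 0))"
  proof (cases "ss ! j = \<sigma>'")
    case True
    have "(\<Sum>\<alpha>\<in>Ac P. \<Sum>\<omega>'\<in>Ob P. traj_prob j P pol ss os as * emis P \<sigma>' \<omega>' *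
        pol (Suc j) (os @ [\<omega>'], as) \<alpha>' * pol (Suc (Suc j)) (os @ [\<omega>', \<omega>], as @ [\<alpha>']) \<alpha>) =
      (\<Sum>\<omega>'\<in>Ob P. traj_prob j P pol ss os as * emis P \<sigma>' \<omega>' * pol (Suc j) (os @ [\<omega>'], as) \<alpha>' *
        (\<Sum>\<alpha>\<in>Ac P. pol (Suc (Suc j)) (os @ [\<omega>', \<omega>], as @ [\<alpha>']) \<alpha>))"
      by (subst sum.swap) (simp add: sum_distrib_left)
    with True sum_pol_next show ?thesis by (simp add: mult_ac)
  qed simp
qed

lemma traj_sum_reward:
  assumes "i < T"
  shows "traj_sum P T (\<lambda>ss os as. traj_prob T P pol ss os as * rew P (ss ! i) (as ! i) (ss ! Suc i))
    = (\<Sum>\<sigma>\<in>St P. \<Sum>\<alpha>\<in>Ac P. \<Sum>\<sigma>'\<in>St P. rew P \<sigma> \<alpha> \<sigma>' * trans P \<sigma> \<alpha> \<sigma>' * (\<Sum>\<omega>\<in>Ob P. emis P \<sigma> \<omega> * obs_act_occ i \<sigma> \<omega> \<alpha>))"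
proof -
  have "traj_sum P T (\<lambda>ss os as. traj_prob T P pol ss os as * rew P (ss ! i) (as ! i) (ss ! Suc i))
     = traj_sum P T (\<lambda>ss os as. traj_prob T P pol ss os as * (\<lambda>ps po pa. rew P (ps ! i) (pa ! i) (ps ! Suc i))
          (take (Suc (Suc i)) ss) (take (Suc i) os) (take (Suc i) as))"
    by (intro traj_sum_cong) simp
  also have "\<dots> = traj_sum P (Suc i) (\<lambda>ss os as. traj_prob (Suc i) P pol ss os as * rew P (ss ! i) (as ! i) (ss ! Suc i))"
    using assms by (subst traj_sum_truncate) auto
  also have "\<dots> = traj_sum P i (\<lambda>ss os as. \<Sum>s\<in>St P. \<Sum>ob\<in>Ob P. \<Sum>a\<in>Ac P.
      traj_prob i P pol ss os as * (emis P (ss ! i) ob * pol (Suc i) (os @ [ob], as) a * trans P (ss ! i) a s) * rew P (ss ! i) a s)"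
    unfolding traj_sum_Suc'
  proof (rule traj_sum_cong)
    fix ss os as assume h: "ss \<in> lists_len (St P) (Suc i)" "os \<in> lists_len (Ob P) i" "as \<in> lists_len (Ac P) i"
    then have l: "length ss = Suc i" "length os = i" "length as = i" by (auto simp: lists_len_def)
    show "(\<Sum>s\<in>St P. \<Sum>ob\<in>Ob P. \<Sum>a\<in>Ac P. traj_prob (Suc i) P pol (ss @ [s]) (os @ [ob]) (as @ [a]) *
            rew P ((ss @ [s]) ! i) ((as @ [a]) ! i) ((ss @ [s]) ! Suc i)) =
      (\<Sum>s\<in>St P. \<Sum>ob\<in>Ob P. \<Sum>a\<in>Ac P.
      traj_prob i P pol ss os as * (emis P (ss ! i) ob * pol (Suc i) (os @ [ob], as) a * trans P (ss ! i) a s) * rew P (ss ! i) a s)"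
      using l by (simp add: traj_prob_snoc nth_append)
  qed
  also have "\<dots> = (\<Sum>\<sigma>\<in>St P. \<Sum>\<alpha>\<in>Ac P. \<Sum>\<sigma>'\<in>St P. rew P \<sigma> \<alpha> \<sigma>' * trans P \<sigma> \<alpha> \<sigma>' * (\<Sum>\<omega>\<in>Ob P. emis P \<sigma> \<omega> * obs_act_occ i \<sigma> \<omega> \<alpha>))"
    unfolding obs_act_occ_def
    by (simp only: sum_distrib_left mult.assoc[symmetric],
        simp only: traj_sum_cmult[symmetric] traj_sum_sum[symmetric],
        simp only: mult_if_zero sum_if_const traj_sum_select_state)
      (rule traj_sum_cong, subst sum_pull_out2, intro sum.cong refl, simp add: mult_ac)
  finally show ?thesis .
qed

lemma his_value_occ:
  "his_value T P pol = (\<Sum>i<T. \<Sum>\<sigma>\<in>St P. \<Sum>\<alpha>\<in>Ac P. \<Sum>\<sigma>'\<in>St P.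
      rew P \<sigma> \<alpha> \<sigma>' * trans P \<sigma> \<alpha> \<sigma>' * (\<Sum>\<omega>\<in>Ob P. emis P \<sigma> \<omega> * obs_act_occ i \<sigma> \<omega> \<alpha>))"
proof -
  have "his_value T P pol = traj_sum P T (\<lambda>ss os as. \<Sum>i<T. traj_prob T P pol ss os as * rew P (ss ! i) (as ! i) (ss ! Suc i))"
    unfolding his_value_def traj_sum_def by (simp add: sum_distrib_left)
  also have "\<dots> = (\<Sum>i<T. traj_sum P T (\<lambda>ss os as. traj_prob T P pol ss os as * rew P (ss ! i) (as ! i) (ss ! Suc i)))"
    by (rule traj_sum_sum)
  also have "\<dots> = (\<Sum>i<T. \<Sum>\<sigma>\<in>St P. \<Sum>\<alpha>\<in>Ac P. \<Sum>\<sigma>'\<in>St P.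
      rew P \<sigma> \<alpha> \<sigma>' * trans P \<sigma> \<alpha> \<sigma>' * (\<Sum>\<omega>\<in>Ob P. emis P \<sigma> \<omega> * obs_act_occ i \<sigma> \<omega> \<alpha>))"
    by (intro sum.cong refl traj_sum_reward) simp
  finally show ?thesis .
qed

definition policy_soa where
  "policy_soa t s o' a = emis P s o' * obs_act_occ (t - 1) s o' a"

definition policy_sas where
  "policy_sas t s a s' = trans P s a s' * (\<Sum>\<omega>\<in>Ob P. emis P s \<omega> * obs_act_occ (t - 1) s \<omega> a)"

definition policy_cut where
  "policy_cut t s' a' o' a = two_step_occ (t - 2) s' a' o' a"

lemma sum_policy_soa_act:
  assumes "t \<in> {1..T}"
  shows "(\<Sum>a\<in>Ac P. policy_soa t s o' a) = emis P s o' * state_occ (t - 1) s"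
proof -
  have "t - 1 < T" using assms by auto
  then show ?thesis unfolding policy_soa_def by (simp add: sum_distrib_left[symmetric] sum_obs_act_occ)
qed

lemma nuQ_policy_sas:
  assumes t: "t \<in> {1..T}" and s: "s \<in> St P"
  shows "nuQ P (init P) policy_sas t s = state_occ (t - 1) s"
proof (cases "t = 1")
  case True
  then show ?thesis using state_occ_0[OF s] by (simp add: nuQ_def)
next
  case False
  then have t_Suc: "t - 1 = Suc (t - 2)" using t by auto
  have "state_occ (t - 1) s =
      (\<Sum>\<sigma>\<in>St P. \<Sum>\<alpha>\<in>Ac P. \<Sum>\<omega>\<in>Ob P. trans P \<sigma> \<alpha> s * emis P \<sigma> \<omega> * obs_act_occ (t - 2) \<sigma> \<omega> \<alpha>)"
    unfolding t_Suc using t by (intro state_occ_Suc s) auto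
  also have "\<dots> = (\<Sum>s''\<in>St P. \<Sum>a''\<in>Ac P. policy_sas (t - 1) s'' a'' s)"
    unfolding policy_sas_def by (simp add: sum_distrib_left mult.assoc numeral_2_eq_2)
  finally show ?thesis using False by (simp add: nuQ_def)
qed

lemma sum_policy_soa:
  assumes "t \<in> {1..T}" "s \<in> St P"
  shows "(\<Sum>o'\<in>Ob P. \<Sum>a\<in>Ac P. policy_soa t s o' a) = nuQ P (init P) policy_sas t s"
  using assms sum_emis[of s]
  by (simp add: sum_policy_soa_act nuQ_policy_sas sum_distrib_right[symmetric])

lemma occupation_policy: "occupation P T policy_soa policy_sas"
proof
  fix t s o' a assume "t \<in> {1..T}" "s \<in> St P" "o' \<in> Ob P" "a \<in> Ac P"
  then show "0 \<le> policy_soa t s o' a"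
    unfolding policy_soa_def by (intro mult_nonneg_nonneg emis_nonneg obs_act_occ_nonneg) auto
next
  fix t s a s' assume "t \<in> {1..T}" "s \<in> St P" "a \<in> Ac P" "s' \<in> St P"
  then show "0 \<le> policy_sas t s a s'"
    unfolding policy_sas_def
    by (intro mult_nonneg_nonneg trans_nonneg sum_nonneg emis_nonneg obs_act_occ_nonneg) auto
next
  fix t s a assume "s \<in> St P" "a \<in> Ac P"
  then show "(\<Sum>s'\<in>St P. policy_sas t s a s') = (\<Sum>o'\<in>Ob P. policy_soa t s o' a)"
    unfolding policy_sas_def policy_soa_def by (simp add: sum_distrib_right[symmetric] sum_trans)
next
  fix t s a s' assume "s \<in> St P" "a \<in> Ac P"
  then show "policy_sas t s a s' = trans P s a s' * (\<Sum>sb\<in>St P. policy_sas t s a sb)"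
    unfolding policy_sas_def by (simp add: sum_distrib_right[symmetric] sum_trans)
next
  fix t s o' assume "t \<in> {1..T}" "s \<in> St P"
  then show "(\<Sum>a\<in>Ac P. policy_soa t s o' a) = emis P s o' * nuQ P (init P) policy_sas t s"
    by (simp add: sum_policy_soa_act nuQ_policy_sas)
qed (use wf sum_policy_soa in auto)

lemma occupation_cuts_policy: "occupation_cuts P T policy_soa policy_sas policy_cut"
proof (intro occupation_cuts.intro occupation_policy occupation_cuts_axioms.intro)
  fix t s' a' o' a assume "t \<in> {2..T}" "s' \<in> St P" "a' \<in> Ac P" "o' \<in> Ob P" "a \<in> Ac P"
  then show "0 \<le> policy_cut t s' a' o' a"
    unfolding policy_cut_def by (intro two_step_occ_nonneg) auto
next
  fix t s o' a assume t: "t \<in> {2..T}" and s: "s \<in> St P"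
  have t_Suc: "t - 1 = Suc (t - 2)" using t by auto
  have "(\<Sum>s'\<in>St P. \<Sum>a'\<in>Ac P. emis P s o' * trans P s' a' s * policy_cut t s' a' o' a) =
      emis P s o' * (\<Sum>s'\<in>St P. \<Sum>a'\<in>Ac P. trans P s' a' s * two_step_occ (t - 2) s' a' o' a)"
    unfolding policy_cut_def by (simp add: sum_distrib_left mult.assoc)
  also have "\<dots> = policy_soa t s o' a"
    unfolding policy_soa_def t_Suc using t by (subst obs_act_occ_Suc[OF _ s]) auto
  finally show "(\<Sum>s'\<in>St P. \<Sum>a'\<in>Ac P. emis P s o' * trans P s' a' s * policy_cut t s' a' o' a) =
      policy_soa t s o' a" .
next
  fix t s' a' o' assume t: "t \<in> {2..T}" and s': "s' \<in> St P" and a': "a' \<in> Ac P"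
  have "(\<Sum>a\<in>Ac P. policy_cut t s' a' o' a) = (\<Sum>\<omega>\<in>Ob P. emis P s' \<omega> * obs_act_occ (t - 2) s' \<omega> a')"
    unfolding policy_cut_def using t by (intro sum_two_step_occ) auto
  also have "\<dots> = (\<Sum>sb\<in>St P. policy_sas (t - 1) s' a' sb)"
    unfolding policy_sas_def using sum_trans[OF s' a']
    by (simp add: sum_distrib_right[symmetric] numeral_2_eq_2)
  finally show "(\<Sum>a\<in>Ac P. policy_cut t s' a' o' a) = (\<Sum>sb\<in>St P. policy_sas (t - 1) s' a' sb)" .
qed

lemma his_value_policy_sas:
  "his_value T P pol = (\<Sum>t=1..T. \<Sum>s\<in>St P. \<Sum>a\<in>Ac P. \<Sum>s'\<in>St P. rew P s a s' * policy_sas t s a s')"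
  unfolding his_value_occ policy_sas_def by (simp add: sum.atLeast1_atMost_eq mult.assoc)

end

section \<open>Projection onto the components\<close>

locale weakly_coupled =
  fixes C :: "nat \<Rightarrow> ('s, 'o, 'a) pomdp" and M q :: nat and D :: "nat \<Rightarrow> 'a \<Rightarrow> nat \<Rightarrow> real" and b :: "nat \<Rightarrow> real"
  assumes wf_components: "\<forall>m<M. wf_pomdp (C m)" and joint_Ac_nonempty: "Ac (joint C M q D b) \<noteq> {}"
begin

abbreviation "J \<equiv> joint C M q D b"

lemma wf_joint: "wf_pomdp J" using wf_pomdp_joint wf_components by blast

lemma finite_Ac_joint: "finite (Ac J)"
  using wf_joint by (simp add: wf_pomdp_def)

lemma wf_component: "m < M \<Longrightarrow> wf_pomdp (C m)" using wf_components by blast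

lemma finite_St: "m < M \<Longrightarrow> finite (St (C m))" and finite_Ob: "m < M \<Longrightarrow> finite (Ob (C m))" and finite_Ac: "m < M \<Longrightarrow> finite (Ac (C m))"
  using wf_component by (auto simp: wf_pomdp_def)

lemma St_joint_comp: "s \<in> St J \<Longrightarrow> m < M \<Longrightarrow> s m \<in> St (C m)"
  and Ob_joint_comp: "o' \<in> Ob J \<Longrightarrow> m < M \<Longrightarrow> o' m \<in> Ob (C m)"
  and Ac_joint_comp: "a \<in> Ac J \<Longrightarrow> m < M \<Longrightarrow> a m \<in> Ac (C m)"
  by (auto simp: joint_simps PiE_iff)

lemma Ac_component_nonempty: "m < M \<Longrightarrow> Ac (C m) \<noteq> {}"
  using joint_Ac_nonempty Ac_joint_comp by blast

end

locale joint_occupation = weakly_coupled C M q D b + occupation "joint C M q D b" T X Y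
  for C :: "nat \<Rightarrow> ('s, 'o, 'a) pomdp" and M q D b T X Y
begin

declare if_cong [cong]

definition proj_sas where
  "proj_sas m t \<sigma> \<alpha> \<sigma>' = (\<Sum>s\<in>St J. \<Sum>a\<in>Ac J. \<Sum>s'\<in>St J.
     if s m = \<sigma> then if a m = \<alpha> then if s' m = \<sigma>' then Y t s a s' else 0 else 0 else 0)"

definition proj_soa where
  "proj_soa m t \<sigma> \<omega> \<alpha> = (\<Sum>s\<in>St J. \<Sum>o'\<in>Ob J. \<Sum>a\<in>Ac J.
     if s m = \<sigma> then if o' m = \<omega> then if a m = \<alpha> then X t s o' a else 0 else 0 else 0)"

definition proj_state where "proj_state m t \<sigma> = (\<Sum>s\<in>St J. if s m = \<sigma> then nuQ J (init J) Y t s else 0)"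

lemma nuQ_proj:
  assumes m: "m < M" and t: "t \<in> {1..T}" and \<sigma>: "\<sigma> \<in> St (C m)"
  shows "nuQ (C m) (init (C m)) (proj_sas m) t \<sigma> = proj_state m t \<sigma>"
proof (cases "t = 1")
  case True
  have "proj_state m t \<sigma> = (\<Sum>s\<in>PiE {..<M} (\<lambda>m. St (C m)). if s m = \<sigma> then \<Prod>k\<in>{..<M}. init (C k) (s k) else 0)"
    using True by (simp add: proj_state_def nuQ_def joint_simps cong: if_cong)
  also have "\<dots> = init (C m) \<sigma>"
    by (rule sum_PiE_marginal_normalized) (use m \<sigma> wf_components in \<open>auto simp: wf_pomdp_def\<close>)
  finally show ?thesis using True by (simp add: nuQ_def)
next
  case False
  have "nuQ (C m) (init (C m)) (proj_sas m) t \<sigma> = (\<Sum>\<sigma>''\<in>St (C m). \<Sum>\<alpha>''\<in>Ac (C m). \<Sum>s\<in>St J. \<Sum>a\<in>Ac J. \<Sum>s'\<in>St J.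
     if s m = \<sigma>'' then if a m = \<alpha>'' then if s' m = \<sigma> then Y (t - 1) s a s' else 0 else 0 else 0)"
    using False by (simp add: nuQ_def proj_sas_def)
  also have "\<dots> = (\<Sum>\<sigma>''\<in>St (C m). \<Sum>s\<in>St J. \<Sum>a\<in>Ac J. \<Sum>s'\<in>St J. \<Sum>\<alpha>''\<in>Ac (C m).
     if s m = \<sigma>'' then if a m = \<alpha>'' then if s' m = \<sigma> then Y (t - 1) s a s' else 0 else 0 else 0)"
    by (intro sum.cong refl sum_push_in3)
  also have "\<dots> = (\<Sum>s\<in>St J. \<Sum>a\<in>Ac J. \<Sum>s'\<in>St J. \<Sum>\<sigma>''\<in>St (C m). \<Sum>\<alpha>''\<in>Ac (C m).
     if s m = \<sigma>'' then if a m = \<alpha>'' then if s' m = \<sigma> then Y (t - 1) s a s' else 0 else 0 else 0)"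
    by (rule sum_push_in3)
  also have "\<dots> = (\<Sum>s\<in>St J. \<Sum>a\<in>Ac J. \<Sum>s'\<in>St J. if s' m = \<sigma> then Y (t - 1) s a s' else 0)"
    using m finite_St finite_Ac by (intro sum.cong refl) (simp add: sum_if_const St_joint_comp Ac_joint_comp)
  also have "\<dots> = (\<Sum>s'\<in>St J. \<Sum>s\<in>St J. \<Sum>a\<in>Ac J. if s' m = \<sigma> then Y (t - 1) s a s' else 0)"
    by (rule sum_pull_out2)
  also have "\<dots> = proj_state m t \<sigma>"
    using False by (simp add: proj_state_def nuQ_def sum_if_const)
  finally show ?thesis .
qed

lemma sum_proj_soa_oa:
  assumes m: "m < M" and t: "t \<in> {1..T}" and \<sigma>: "\<sigma> \<in> St (C m)"
  shows "(\<Sum>\<omega>\<in>Ob (C m). \<Sum>\<alpha>\<in>Ac (C m). proj_soa m t \<sigma> \<omega> \<alpha>) = proj_state m t \<sigma>"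
proof -
  have "(\<Sum>\<omega>\<in>Ob (C m). \<Sum>\<alpha>\<in>Ac (C m). proj_soa m t \<sigma> \<omega> \<alpha>) = (\<Sum>\<omega>\<in>Ob (C m). \<Sum>s\<in>St J. \<Sum>o'\<in>Ob J. \<Sum>a\<in>Ac J. \<Sum>\<alpha>\<in>Ac (C m).
     if s m = \<sigma> then if o' m = \<omega> then if a m = \<alpha> then X t s o' a else 0 else 0 else 0)"
    unfolding proj_soa_def by (intro sum.cong refl sum_push_in3)
  also have "\<dots> = (\<Sum>s\<in>St J. \<Sum>o'\<in>Ob J. \<Sum>a\<in>Ac J. \<Sum>\<omega>\<in>Ob (C m). \<Sum>\<alpha>\<in>Ac (C m).
     if s m = \<sigma> then if o' m = \<omega> then if a m = \<alpha> then X t s o' a else 0 else 0 else 0)"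
    by (rule sum_push_in3)
  also have "\<dots> = (\<Sum>s\<in>St J. if s m = \<sigma> then (\<Sum>o'\<in>Ob J. \<Sum>a\<in>Ac J. X t s o' a) else 0)"
    using m finite_Ob finite_Ac by (simp add: sum_if_const St_joint_comp Ob_joint_comp Ac_joint_comp)
  also have "\<dots> = proj_state m t \<sigma>"
    unfolding proj_state_def using t by (intro sum.cong refl) (simp add: X_flow nuQ_def)
  finally show ?thesis .
qed

lemma sum_proj_sas:
  assumes m: "m < M"
  shows "(\<Sum>\<sigma>'\<in>St (C m). proj_sas m t \<sigma> \<alpha> \<sigma>') =
     (\<Sum>s\<in>St J. \<Sum>a\<in>Ac J. if s m = \<sigma> then if a m = \<alpha> then (\<Sum>s'\<in>St J. Y t s a s') else 0 else 0)"
proof -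
  have "(\<Sum>\<sigma>'\<in>St (C m). proj_sas m t \<sigma> \<alpha> \<sigma>') = (\<Sum>s\<in>St J. \<Sum>a\<in>Ac J. \<Sum>s'\<in>St J. \<Sum>\<sigma>'\<in>St (C m).
     if s m = \<sigma> then if a m = \<alpha> then if s' m = \<sigma>' then Y t s a s' else 0 else 0 else 0)"
    unfolding proj_sas_def by (rule sum_push_in3)
  also have "\<dots> = (\<Sum>s\<in>St J. \<Sum>a\<in>Ac J. if s m = \<sigma> then if a m = \<alpha> then (\<Sum>s'\<in>St J. Y t s a s') else 0 else 0)"
    using m finite_St by (simp add: sum_if_const St_joint_comp)
  finally show ?thesis .
qed

lemma sum_proj_soa_o:
  assumes m: "m < M"
  shows "(\<Sum>\<omega>\<in>Ob (C m). proj_soa m t \<sigma> \<omega> \<alpha>) =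
     (\<Sum>s\<in>St J. \<Sum>a\<in>Ac J. if s m = \<sigma> then if a m = \<alpha> then (\<Sum>o'\<in>Ob J. X t s o' a) else 0 else 0)"
proof -
  have "(\<Sum>\<omega>\<in>Ob (C m). proj_soa m t \<sigma> \<omega> \<alpha>) = (\<Sum>s\<in>St J. \<Sum>o'\<in>Ob J. \<Sum>a\<in>Ac J. \<Sum>\<omega>\<in>Ob (C m).
     if s m = \<sigma> then if o' m = \<omega> then if a m = \<alpha> then X t s o' a else 0 else 0 else 0)"
    unfolding proj_soa_def by (rule sum_push_in3)
  also have "\<dots> = (\<Sum>s\<in>St J. \<Sum>o'\<in>Ob J. \<Sum>a\<in>Ac J. if s m = \<sigma> then if a m = \<alpha> then X t s o' a else 0 else 0)"
    using m finite_Ob by (simp add: sum_if_const Ob_joint_comp)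
  also have "\<dots> = (\<Sum>s\<in>St J. \<Sum>a\<in>Ac J. \<Sum>o'\<in>Ob J. if s m = \<sigma> then if a m = \<alpha> then X t s o' a else 0 else 0)"
    by (intro sum.cong refl sum.swap)
  also have "\<dots> = (\<Sum>s\<in>St J. \<Sum>a\<in>Ac J. if s m = \<sigma> then if a m = \<alpha> then (\<Sum>o'\<in>Ob J. X t s o' a) else 0 else 0)"
    by (simp add: sum_if_const)
  finally show ?thesis .
qed

lemma proj_sas_trans:
  assumes m: "m < M" and t: "t \<in> {1..T}" and \<sigma>': "\<sigma>' \<in> St (C m)"
  shows "proj_sas m t \<sigma> \<alpha> \<sigma>' = trans (C m) \<sigma> \<alpha> \<sigma>' * (\<Sum>sb\<in>St (C m). proj_sas m t \<sigma> \<alpha> sb)"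
proof -
  have "proj_sas m t \<sigma> \<alpha> \<sigma>' = (\<Sum>s\<in>St J. \<Sum>a\<in>Ac J. if s m = \<sigma> then if a m = \<alpha> then
        trans (C m) \<sigma> \<alpha> \<sigma>' * (\<Sum>s'\<in>St J. Y t s a s') else 0 else 0)"
    unfolding proj_sas_def
  proof (intro sum.cong refl)
    fix s a assume s: "s \<in> St J" and a: "a \<in> Ac J"
    have sk: "\<And>k. k < M \<Longrightarrow> s k \<in> St (C k)" and ak: "\<And>k. k < M \<Longrightarrow> a k \<in> Ac (C k)" using s a St_joint_comp Ac_joint_comp by auto
    have comp_marg: "(\<Sum>s'\<in>St J. if s' m = \<sigma>' then trans J s a s' else 0) = trans (C m) (s m) (a m) \<sigma>'"
      unfolding joint_simps
      by (rule sum_PiE_marginal_normalized) (use m \<sigma>' wf_components sk ak in \<open>auto simp: wf_pomdp_def\<close>)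
    have "(\<Sum>s'\<in>St J. if s' m = \<sigma>' then Y t s a s' else 0) =
        (\<Sum>s'\<in>St J. (\<Sum>sb\<in>St J. Y t s a sb) * (if s' m = \<sigma>' then trans J s a s' else 0))"
      using Y_trans[OF t s a] by (intro sum.cong refl) (simp)
    also have "\<dots> = trans (C m) (s m) (a m) \<sigma>' * (\<Sum>sb\<in>St J. Y t s a sb)"
      by (simp only: sum_distrib_left[symmetric] comp_marg mult.commute)
    finally show "(\<Sum>s'\<in>St J. if s m = \<sigma> then if a m = \<alpha> then if s' m = \<sigma>' then Y t s a s' else 0 else 0 else 0) =
        (if s m = \<sigma> then if a m = \<alpha> then trans (C m) \<sigma> \<alpha> \<sigma>' * (\<Sum>s'\<in>St J. Y t s a s') else 0 else 0)"
      by (simp add: sum_if_const)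
  qed
  also have "\<dots> = trans (C m) \<sigma> \<alpha> \<sigma>' * (\<Sum>sb\<in>St (C m). proj_sas m t \<sigma> \<alpha> sb)"
    unfolding sum_proj_sas[OF m] by (simp add: sum_distrib_left mult_if_zero)
  finally show ?thesis .
qed

lemma sum_proj_soa_a:
  assumes m: "m < M" and t: "t \<in> {1..T}" and \<omega>: "\<omega> \<in> Ob (C m)"
  shows "(\<Sum>\<alpha>\<in>Ac (C m). proj_soa m t \<sigma> \<omega> \<alpha>) = emis (C m) \<sigma> \<omega> * proj_state m t \<sigma>"
proof -
  have "(\<Sum>\<alpha>\<in>Ac (C m). proj_soa m t \<sigma> \<omega> \<alpha>) = (\<Sum>s\<in>St J. \<Sum>o'\<in>Ob J. \<Sum>a\<in>Ac J. \<Sum>\<alpha>\<in>Ac (C m).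
     if s m = \<sigma> then if o' m = \<omega> then if a m = \<alpha> then X t s o' a else 0 else 0 else 0)"
    unfolding proj_soa_def by (rule sum_push_in3)
  also have "\<dots> = (\<Sum>s\<in>St J. if s m = \<sigma> then (\<Sum>o'\<in>Ob J. if o' m = \<omega> then (\<Sum>a\<in>Ac J. X t s o' a) else 0) else 0)"
    using m finite_Ac by (simp add: sum_if_const Ac_joint_comp)
  also have "\<dots> = (\<Sum>s\<in>St J. if s m = \<sigma> then emis (C m) \<sigma> \<omega> * nuQ J (init J) Y t s else 0)"
  proof (intro sum.cong refl)
    fix s assume s: "s \<in> St J"
    have sk: "\<And>k. k < M \<Longrightarrow> s k \<in> St (C k)" using s St_joint_comp by auto
    have comp_marg: "(\<Sum>o'\<in>Ob J. if o' m = \<omega> then emis J s o' else 0) = emis (C m) (s m) \<omega>"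
      unfolding joint_simps
      by (rule sum_PiE_marginal_normalized) (use m \<omega> wf_components sk in \<open>auto simp: wf_pomdp_def\<close>)
    have "(\<Sum>o'\<in>Ob J. if o' m = \<omega> then (\<Sum>a\<in>Ac J. X t s o' a) else 0) =
          (\<Sum>o'\<in>Ob J. nuQ J (init J) Y t s * (if o' m = \<omega> then emis J s o' else 0))"
      using X_emis[OF t s] by (intro sum.cong refl) simp
    also have "\<dots> = emis (C m) (s m) \<omega> * nuQ J (init J) Y t s"
      unfolding sum_distrib_left[symmetric] comp_marg by (rule mult.commute)
    finally show "(if s m = \<sigma> then (\<Sum>o'\<in>Ob J. if o' m = \<omega> then (\<Sum>a\<in>Ac J. X t s o' a) else 0) else 0) =
        (if s m = \<sigma> then emis (C m) \<sigma> \<omega> * nuQ J (init J) Y t s else 0)" by simp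
  qed
  also have "\<dots> = emis (C m) \<sigma> \<omega> * proj_state m t \<sigma>"
    unfolding proj_state_def by (simp add: sum_distrib_left mult_if_zero)
  finally show ?thesis .
qed

lemma proj_state_nonneg: "t \<in> {1..T} \<Longrightarrow> proj_state m t \<sigma> \<ge> 0"
  unfolding proj_state_def by (auto intro!: sum_nonneg nuQ_nonneg)

lemma sum_proj_state: assumes m: "m < M" and t: "t \<in> {1..T}" shows "(\<Sum>\<sigma>\<in>St (C m). proj_state m t \<sigma>) = 1"
proof -
  have "(\<Sum>\<sigma>\<in>St (C m). proj_state m t \<sigma>) = (\<Sum>s\<in>St J. \<Sum>\<sigma>\<in>St (C m). if s m = \<sigma> then nuQ J (init J) Y t s else 0)"
    unfolding proj_state_def by (rule sum.swap)
  also have "\<dots> = (\<Sum>s\<in>St J. nuQ J (init J) Y t s)" using m finite_St by (simp add: St_joint_comp)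
  finally show ?thesis using sum_nuQ t by simp
qed

lemma proj_sas_nonneg: "t \<in> {1..T} \<Longrightarrow> proj_sas m t \<sigma> \<alpha> \<sigma>' \<ge> 0"
  unfolding proj_sas_def by (auto intro!: sum_nonneg Y_nonneg)

lemma proj_soa_nonneg: "t \<in> {1..T} \<Longrightarrow> proj_soa m t \<sigma> \<omega> \<alpha> \<ge> 0"
  unfolding proj_soa_def by (auto intro!: sum_nonneg X_nonneg)

definition proj_policy where
  "proj_policy m t \<omega> \<alpha> = (\<Sum>\<sigma>\<in>St (C m). proj_soa m t \<sigma> \<omega> \<alpha>) +
     (1 - (\<Sum>\<sigma>\<in>St (C m). emis (C m) \<sigma> \<omega> * proj_state m t \<sigma>)) / real (card (Ac (C m)))"

lemma emis_le_1: "m < M \<Longrightarrow> \<sigma> \<in> St (C m) \<Longrightarrow> \<omega> \<in> Ob (C m) \<Longrightarrow> emis (C m) \<sigma> \<omega> \<le> 1"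
proof -
  assume h: "m < M" "\<sigma> \<in> St (C m)" "\<omega> \<in> Ob (C m)"
  then have w: "wf_pomdp (C m)" using wf_component by blast
  then have "emis (C m) \<sigma> \<omega> \<le> (\<Sum>ob\<in>Ob (C m). emis (C m) \<sigma> ob)"
    using h by (intro member_le_sum) (auto simp: wf_pomdp_def)
  then show ?thesis using w h by (auto simp: wf_pomdp_def)
qed

lemma emis_nonneg: "m < M \<Longrightarrow> \<sigma> \<in> St (C m) \<Longrightarrow> \<omega> \<in> Ob (C m) \<Longrightarrow> emis (C m) \<sigma> \<omega> \<ge> 0"
  using wf_component by (auto simp: wf_pomdp_def)

lemma proj_policy_props:
  assumes m: "m < M" and t: "t \<in> {1..T}" and \<omega>: "\<omega> \<in> Ob (C m)"
  shows "\<alpha> \<in> Ac (C m) \<Longrightarrow> 0 \<le> proj_policy m t \<omega> \<alpha>" "\<alpha> \<in> Ac (C m) \<Longrightarrow> proj_policy m t \<omega> \<alpha> \<le> 1"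
    "(\<Sum>\<alpha>\<in>Ac (C m). proj_policy m t \<omega> \<alpha>) = 1"
    "\<sigma> \<in> St (C m) \<Longrightarrow> \<alpha> \<in> Ac (C m) \<Longrightarrow> proj_soa m t \<sigma> \<omega> \<alpha> \<le> proj_policy m t \<omega> \<alpha>"
    "\<sigma> \<in> St (C m) \<Longrightarrow> \<alpha> \<in> Ac (C m) \<Longrightarrow> emis (C m) \<sigma> \<omega> * proj_state m t \<sigma> + proj_policy m t \<omega> \<alpha> - 1 \<le> proj_soa m t \<sigma> \<omega> \<alpha>"
proof -
  have c1: "(\<Sum>\<sigma>\<in>St (C m). emis (C m) \<sigma> \<omega> * proj_state m t \<sigma>) \<le> 1"
  proof -
    have "(\<Sum>\<sigma>\<in>St (C m). emis (C m) \<sigma> \<omega> * proj_state m t \<sigma>) \<le> (\<Sum>\<sigma>\<in>St (C m). proj_state m t \<sigma>)"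
      using m t \<omega> by (intro sum_mono mult_left_le_one_le proj_state_nonneg emis_le_1 emis_nonneg) auto
    then show ?thesis using sum_proj_state[OF m t] by simp
  qed
  note L = mccormick_completion[where S="St (C m)" and A="Ac (C m)" and \<tau>="\<lambda>\<sigma> \<alpha>. proj_soa m t \<sigma> \<omega> \<alpha>"
      and E="\<lambda>\<sigma>. emis (C m) \<sigma> \<omega> * proj_state m t \<sigma>", OF finite_St[OF m] finite_Ac[OF m] Ac_component_nonempty[OF m] proj_soa_nonneg[OF t] sum_proj_soa_a[OF m t \<omega>] c1,
      folded proj_policy_def]
  show "\<alpha> \<in> Ac (C m) \<Longrightarrow> 0 \<le> proj_policy m t \<omega> \<alpha>" "\<alpha> \<in> Ac (C m) \<Longrightarrow> proj_policy m t \<omega> \<alpha> \<le> 1"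
    "(\<Sum>\<alpha>\<in>Ac (C m). proj_policy m t \<omega> \<alpha>) = 1"
    "\<sigma> \<in> St (C m) \<Longrightarrow> \<alpha> \<in> Ac (C m) \<Longrightarrow> proj_soa m t \<sigma> \<omega> \<alpha> \<le> proj_policy m t \<omega> \<alpha>"
    "\<sigma> \<in> St (C m) \<Longrightarrow> \<alpha> \<in> Ac (C m) \<Longrightarrow> emis (C m) \<sigma> \<omega> * proj_state m t \<sigma> + proj_policy m t \<omega> \<alpha> - 1 \<le> proj_soa m t \<sigma> \<omega> \<alpha>"
    using L by auto
qed

lemma QR_proj:
  assumes m: "m < M"
  shows "QR T (C m) (init (C m)) (proj_soa m) (proj_sas m) (proj_policy m)"
  unfolding QR_def
proof (intro conjI ballI)
  fix t ob a assume t: "t \<in> {1..T}" and ob: "ob \<in> Ob (C m)" and a: "a \<in> Ac (C m)"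
  show "0 \<le> proj_policy m t ob a" using proj_policy_props[OF m t ob] a by auto
  show "proj_policy m t ob a \<le> 1" using proj_policy_props[OF m t ob] a by auto
next
  fix t ob assume t: "t \<in> {1..T}" and ob: "ob \<in> Ob (C m)"
  show "(\<Sum>a\<in>Ac (C m). proj_policy m t ob a) = 1" using proj_policy_props[OF m t ob] by auto
next
  fix s assume "s \<in> St (C m)"
  then show "0 \<le> init (C m) s" using wf_component[OF m] by (auto simp: wf_pomdp_def)
  show "init (C m) s = init (C m) s" ..
next
  fix t s ob a assume t: "t \<in> {1..T}"
  show "0 \<le> proj_soa m t s ob a" using proj_soa_nonneg[OF t] .
next
  fix t s a s' assume t: "t \<in> {1..T}"
  show "0 \<le> proj_sas m t s a s'" using proj_sas_nonneg[OF t] .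
next
  fix t s assume t: "t \<in> {1..T}" and s: "s \<in> St (C m)"
  show "(\<Sum>ob\<in>Ob (C m). \<Sum>a\<in>Ac (C m). proj_soa m t s ob a) = nuQ (C m) (init (C m)) (proj_sas m) t s"
    using sum_proj_soa_oa[OF m t s] nuQ_proj[OF m t s] by simp
next
  fix t s a assume t: "t \<in> {1..T}" and s: "s \<in> St (C m)" and a: "a \<in> Ac (C m)"
  show "(\<Sum>sb\<in>St (C m). proj_sas m t s a sb) = (\<Sum>ob\<in>Ob (C m). proj_soa m t s ob a)"
    unfolding sum_proj_sas[OF m] sum_proj_soa_o[OF m]
    using t by (intro sum.cong refl) (simp add: Y_X_balance)
next
  fix t s a s' assume t: "t \<in> {1..T}" and s': "s' \<in> St (C m)"
  show "proj_sas m t s a s' = trans (C m) s a s' * (\<Sum>sb\<in>St (C m). proj_sas m t s a sb)"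
    using proj_sas_trans[OF m t s'] .
next
  fix t s ob a assume t: "t \<in> {1..T}" and s: "s \<in> St (C m)" and ob: "ob \<in> Ob (C m)" and a: "a \<in> Ac (C m)"
  have le: "proj_soa m t s ob a \<le> (\<Sum>a'\<in>Ac (C m). proj_soa m t s ob a')"
    using a finite_Ac[OF m] by (intro member_le_sum proj_soa_nonneg[OF t]) auto
  show "proj_soa m t s ob a \<le> emis (C m) s ob * nuQ (C m) (init (C m)) (proj_sas m) t s"
    using le sum_proj_soa_a[OF m t ob] nuQ_proj[OF m t s] by auto
  show "proj_soa m t s ob a \<le> proj_policy m t ob a" using proj_policy_props[OF m t ob] s a by auto
  show "emis (C m) s ob * nuQ (C m) (init (C m)) (proj_sas m) t s + proj_policy m t ob a - 1 \<le> proj_soa m t s ob a"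
    using proj_policy_props[OF m t ob] s a nuQ_proj[OF m t s] by auto
qed

lemma sum_proj_soa_so:
  assumes m: "m < M"
  shows "(\<Sum>\<sigma>\<in>St (C m). \<Sum>\<omega>\<in>Ob (C m). proj_soa m t \<sigma> \<omega> \<alpha>) =
    (\<Sum>s\<in>St J. \<Sum>o'\<in>Ob J. \<Sum>a\<in>Ac J. if a m = \<alpha> then X t s o' a else 0)"
proof -
  have "(\<Sum>\<sigma>\<in>St (C m). \<Sum>\<omega>\<in>Ob (C m). proj_soa m t \<sigma> \<omega> \<alpha>) = (\<Sum>\<sigma>\<in>St (C m). \<Sum>s\<in>St J. \<Sum>o'\<in>Ob J. \<Sum>a\<in>Ac J. \<Sum>\<omega>\<in>Ob (C m).
     if s m = \<sigma> then if o' m = \<omega> then if a m = \<alpha> then X t s o' a else 0 else 0 else 0)"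
    unfolding proj_soa_def by (intro sum.cong refl sum_push_in3)
  also have "\<dots> = (\<Sum>s\<in>St J. \<Sum>o'\<in>Ob J. \<Sum>a\<in>Ac J. \<Sum>\<sigma>\<in>St (C m). \<Sum>\<omega>\<in>Ob (C m).
     if s m = \<sigma> then if o' m = \<omega> then if a m = \<alpha> then X t s o' a else 0 else 0 else 0)"
    by (rule sum_push_in3)
  also have "\<dots> = (\<Sum>s\<in>St J. \<Sum>o'\<in>Ob J. \<Sum>a\<in>Ac J. if a m = \<alpha> then X t s o' a else 0)"
    using m finite_St finite_Ob by (simp add: sum_if_const St_joint_comp Ob_joint_comp)
  finally show ?thesis .
qed

lemma proj_budget:
  assumes t: "t \<in> {1..T}" and j: "j < q"
  shows "(\<Sum>m<M. \<Sum>a\<in>Ac (C m). D m a j * (\<Sum>s\<in>St (C m). \<Sum>ob\<in>Ob (C m). proj_soa m t s ob a)) \<le> b j"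
proof -
  have step: "(\<Sum>\<alpha>\<in>Ac (C m). D m \<alpha> j * (\<Sum>s\<in>St (C m). \<Sum>ob\<in>Ob (C m). proj_soa m t s ob \<alpha>)) =
     (\<Sum>s\<in>St J. \<Sum>o'\<in>Ob J. \<Sum>a\<in>Ac J. D m (a m) j * X t s o' a)" if m: "m < M" for m
  proof -
    have "(\<Sum>\<alpha>\<in>Ac (C m). D m \<alpha> j * (\<Sum>s\<in>St (C m). \<Sum>ob\<in>Ob (C m). proj_soa m t s ob \<alpha>)) =
      (\<Sum>\<alpha>\<in>Ac (C m). \<Sum>s\<in>St J. \<Sum>o'\<in>Ob J. \<Sum>a\<in>Ac J. if a m = \<alpha> then D m \<alpha> j * X t s o' a else 0)"
      unfolding sum_proj_soa_so[OF m] by (simp add: sum_distrib_left mult_if_zero)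
    also have "\<dots> = (\<Sum>s\<in>St J. \<Sum>o'\<in>Ob J. \<Sum>a\<in>Ac J. \<Sum>\<alpha>\<in>Ac (C m). if a m = \<alpha> then D m \<alpha> j * X t s o' a else 0)"
      by (rule sum_push_in3)
    also have "\<dots> = (\<Sum>s\<in>St J. \<Sum>o'\<in>Ob J. \<Sum>a\<in>Ac J. D m (a m) j * X t s o' a)"
      using m finite_Ac by (simp add: Ac_joint_comp)
    finally show ?thesis .
  qed
  have "(\<Sum>m<M. \<Sum>a\<in>Ac (C m). D m a j * (\<Sum>s\<in>St (C m). \<Sum>ob\<in>Ob (C m). proj_soa m t s ob a)) =
     (\<Sum>m<M. \<Sum>s\<in>St J. \<Sum>o'\<in>Ob J. \<Sum>a\<in>Ac J. D m (a m) j * X t s o' a)"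
    using step by simp
  also have "\<dots> = (\<Sum>s\<in>St J. \<Sum>o'\<in>Ob J. \<Sum>a\<in>Ac J. \<Sum>m<M. D m (a m) j * X t s o' a)"
    by (rule sum_push_in3)
  also have "\<dots> = (\<Sum>s\<in>St J. \<Sum>o'\<in>Ob J. \<Sum>a\<in>Ac J. (\<Sum>m<M. D m (a m) j) * X t s o' a)"
    by (simp add: sum_distrib_right)
  also have "\<dots> \<le> (\<Sum>s\<in>St J. \<Sum>o'\<in>Ob J. \<Sum>a\<in>Ac J. b j * X t s o' a)"
  proof (intro sum_mono mult_right_mono)
    fix s o' a assume "s \<in> St J" "o' \<in> Ob J" "a \<in> Ac J"
    then show "(\<Sum>m<M. D m (a m) j) \<le> b j" "0 \<le> X t s o' a" using j X_nonneg[OF t] by (auto simp: joint_simps)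
  qed
  also have "\<dots> = b j * (\<Sum>s\<in>St J. nuQ J (init J) Y t s)"
    using t by (simp add: sum_distrib_left[symmetric] X_flow nuQ_def)
  also have "\<dots> = b j" using sum_nuQ[OF t] by simp
  finally show ?thesis .
qed

lemma proj_obj_component:
  assumes m: "m < M"
  shows "(\<Sum>\<sigma>\<in>St (C m). \<Sum>\<alpha>\<in>Ac (C m). \<Sum>\<sigma>'\<in>St (C m). rew (C m) \<sigma> \<alpha> \<sigma>' * proj_sas m t \<sigma> \<alpha> \<sigma>') =
    (\<Sum>s\<in>St J. \<Sum>a\<in>Ac J. \<Sum>s'\<in>St J. rew (C m) (s m) (a m) (s' m) * Y t s a s')"
proof -
  have "(\<Sum>\<sigma>\<in>St (C m). \<Sum>\<alpha>\<in>Ac (C m). \<Sum>\<sigma>'\<in>St (C m). rew (C m) \<sigma> \<alpha> \<sigma>' * proj_sas m t \<sigma> \<alpha> \<sigma>') =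
    (\<Sum>\<sigma>\<in>St (C m). \<Sum>\<alpha>\<in>Ac (C m). \<Sum>\<sigma>'\<in>St (C m). \<Sum>s\<in>St J. \<Sum>a\<in>Ac J. \<Sum>s'\<in>St J.
      if s m = \<sigma> then if a m = \<alpha> then if s' m = \<sigma>' then rew (C m) \<sigma> \<alpha> \<sigma>' * Y t s a s' else 0 else 0 else 0)"
    unfolding proj_sas_def by (simp add: sum_distrib_left mult_if_zero)
  also have "\<dots> = (\<Sum>\<sigma>\<in>St (C m). \<Sum>\<alpha>\<in>Ac (C m). \<Sum>s\<in>St J. \<Sum>a\<in>Ac J. \<Sum>s'\<in>St J. \<Sum>\<sigma>'\<in>St (C m).
      if s m = \<sigma> then if a m = \<alpha> then if s' m = \<sigma>' then rew (C m) \<sigma> \<alpha> \<sigma>' * Y t s a s' else 0 else 0 else 0)"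
    by (intro sum.cong refl sum_push_in3)
  also have "\<dots> = (\<Sum>\<sigma>\<in>St (C m). \<Sum>s\<in>St J. \<Sum>a\<in>Ac J. \<Sum>s'\<in>St J. \<Sum>\<alpha>\<in>Ac (C m). \<Sum>\<sigma>'\<in>St (C m).
      if s m = \<sigma> then if a m = \<alpha> then if s' m = \<sigma>' then rew (C m) \<sigma> \<alpha> \<sigma>' * Y t s a s' else 0 else 0 else 0)"
    by (intro sum.cong refl sum_push_in3)
  also have "\<dots> = (\<Sum>s\<in>St J. \<Sum>a\<in>Ac J. \<Sum>s'\<in>St J. \<Sum>\<sigma>\<in>St (C m). \<Sum>\<alpha>\<in>Ac (C m). \<Sum>\<sigma>'\<in>St (C m).
      if s m = \<sigma> then if a m = \<alpha> then if s' m = \<sigma>' then rew (C m) \<sigma> \<alpha> \<sigma>' * Y t s a s' else 0 else 0 else 0)"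
    by (rule sum_push_in3)
  also have "\<dots> = (\<Sum>s\<in>St J. \<Sum>a\<in>Ac J. \<Sum>s'\<in>St J. rew (C m) (s m) (a m) (s' m) * Y t s a s')"
    using m finite_St finite_Ac by (simp add: sum_if_const St_joint_comp Ac_joint_comp)
  finally show ?thesis .
qed

lemma relax_obj_proj:
  "relax_obj T C M proj_sas = (\<Sum>t=1..T. \<Sum>s\<in>St J. \<Sum>a\<in>Ac J. \<Sum>s'\<in>St J. rew J s a s' * Y t s a s')"
proof -
  have "relax_obj T C M proj_sas = (\<Sum>t=1..T. \<Sum>m<M. \<Sum>s\<in>St J. \<Sum>a\<in>Ac J. \<Sum>s'\<in>St J. rew (C m) (s m) (a m) (s' m) * Y t s a s')"
    unfolding relax_obj_def by (intro sum.cong refl proj_obj_component) auto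
  also have "\<dots> = (\<Sum>t=1..T. \<Sum>s\<in>St J. \<Sum>a\<in>Ac J. \<Sum>s'\<in>St J. \<Sum>m<M. rew (C m) (s m) (a m) (s' m) * Y t s a s')"
    by (intro sum.cong refl sum_push_in3)
  also have "\<dots> = (\<Sum>t=1..T. \<Sum>s\<in>St J. \<Sum>a\<in>Ac J. \<Sum>s'\<in>St J. rew J s a s' * Y t s a s')"
    by (simp add: sum_distrib_right joint_simps)
  finally show ?thesis .
qed

lemma relax_feasible_proj:
  "relax_feasible T C M q D b (\<lambda>m. init (C m)) proj_soa proj_sas proj_policy"
  unfolding relax_feasible_def using QR_proj proj_budget by auto

end

locale joint_occupation_cuts = joint_occupation C M q D b T X Y + occupation_cuts "joint C M q D b" T X Y K
  for C :: "nat \<Rightarrow> ('s, 'o, 'a) pomdp" and M q D b T X Y K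
begin

definition proj_cut where
  "proj_cut m t \<sigma>' \<alpha>' \<sigma> \<omega> \<alpha> = (\<Sum>s'\<in>St J. \<Sum>a'\<in>Ac J. \<Sum>s\<in>St J. \<Sum>o'\<in>Ob J. \<Sum>a\<in>Ac J.
     if s' m = \<sigma>' then if a' m = \<alpha>' then if s m = \<sigma> then if o' m = \<omega> then if a m = \<alpha> then
       emis J s o' * trans J s' a' s * K t s' a' o' a else 0 else 0 else 0 else 0 else 0)"

lemma emis_joint_nonneg: "s \<in> St J \<Longrightarrow> o' \<in> Ob J \<Longrightarrow> emis J s o' \<ge> 0"
  using wf_joint unfolding wf_pomdp_def by simp
lemma trans_joint_nonneg: "s \<in> St J \<Longrightarrow> a \<in> Ac J \<Longrightarrow> s' \<in> St J \<Longrightarrow> trans J s a s' \<ge> 0"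
  using wf_joint unfolding wf_pomdp_def by simp

lemma proj_cut_nonneg: "t \<in> {2..T} \<Longrightarrow> proj_cut m t \<sigma>' \<alpha>' \<sigma> \<omega> \<alpha> \<ge> 0"
  unfolding proj_cut_def by (auto intro!: sum_nonneg mult_nonneg_nonneg K_nonneg emis_joint_nonneg trans_joint_nonneg)

lemma sum_proj_cut_prev:
  assumes m: "m < M" and t: "t \<in> {2..T}"
  shows "(\<Sum>\<sigma>'\<in>St (C m). \<Sum>\<alpha>'\<in>Ac (C m). proj_cut m t \<sigma>' \<alpha>' \<sigma> \<omega> \<alpha>) = proj_soa m t \<sigma> \<omega> \<alpha>"
proof -
  have "(\<Sum>\<sigma>'\<in>St (C m). \<Sum>\<alpha>'\<in>Ac (C m). proj_cut m t \<sigma>' \<alpha>' \<sigma> \<omega> \<alpha>) =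
    (\<Sum>\<sigma>'\<in>St (C m). \<Sum>\<alpha>'\<in>Ac (C m). \<Sum>s'\<in>St J. \<Sum>a'\<in>Ac J. if s' m = \<sigma>' then if a' m = \<alpha>' then
      (\<Sum>s\<in>St J. \<Sum>o'\<in>Ob J. \<Sum>a\<in>Ac J. if s m = \<sigma> then if o' m = \<omega> then if a m = \<alpha> then
       emis J s o' * trans J s' a' s * K t s' a' o' a else 0 else 0 else 0) else 0 else 0)"
    unfolding proj_cut_def by (simp add: sum_if_const)
  also have "\<dots> = (\<Sum>s'\<in>St J. \<Sum>a'\<in>Ac J. \<Sum>s\<in>St J. \<Sum>o'\<in>Ob J. \<Sum>a\<in>Ac J. if s m = \<sigma> then if o' m = \<omega> then if a m = \<alpha> then
       emis J s o' * trans J s' a' s * K t s' a' o' a else 0 else 0 else 0)"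
    by (rule sum_collapse2) (use m finite_St finite_Ac St_joint_comp Ac_joint_comp in auto)
  also have "\<dots> = (\<Sum>s'\<in>St J. \<Sum>s\<in>St J. \<Sum>o'\<in>Ob J. \<Sum>a\<in>Ac J. \<Sum>a'\<in>Ac J. if s m = \<sigma> then if o' m = \<omega> then if a m = \<alpha> then
       emis J s o' * trans J s' a' s * K t s' a' o' a else 0 else 0 else 0)"
    by (intro sum.cong refl sum_push_in3)
  also have "\<dots> = (\<Sum>s\<in>St J. \<Sum>o'\<in>Ob J. \<Sum>a\<in>Ac J. \<Sum>s'\<in>St J. \<Sum>a'\<in>Ac J. if s m = \<sigma> then if o' m = \<omega> then if a m = \<alpha> then
       emis J s o' * trans J s' a' s * K t s' a' o' a else 0 else 0 else 0)"
    by (rule sum_push_in3)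
  also have "\<dots> = proj_soa m t \<sigma> \<omega> \<alpha>"
    unfolding proj_soa_def using t by (intro sum.cong refl) (simp add: sum_if_const K_X)
  finally show ?thesis .
qed

definition other_obs_prob where
  "other_obs_prob m s' a' o' = (\<Prod>k\<in>{..<M}-{m}. \<Sum>x\<in>St (C k). emis (C k) x (o' k) * trans (C k) (s' k) (a' k) x)"

lemma sum_joint_state_marginal:
  assumes m: "m < M" and s': "s' \<in> St J" and a': "a' \<in> Ac J" and o': "o' \<in> Ob J" and \<sigma>: "\<sigma> \<in> St (C m)"
  shows "(\<Sum>s\<in>St J. if s m = \<sigma> then emis J s o' * trans J s' a' s else 0) =
     emis (C m) \<sigma> (o' m) * trans (C m) (s' m) (a' m) \<sigma> * other_obs_prob m s' a' o'"
proof -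
  have "(\<Sum>s\<in>St J. if s m = \<sigma> then emis J s o' * trans J s' a' s else 0) =
     (\<Sum>s\<in>PiE {..<M} (\<lambda>k. St (C k)). if s m = \<sigma> then
        (\<Prod>k\<in>{..<M}. emis (C k) (s k) (o' k) * trans (C k) (s' k) (a' k) (s k)) else 0)"
    by (simp add: prod.distrib joint_simps)
  also have "\<dots> = emis (C m) \<sigma> (o' m) * trans (C m) (s' m) (a' m) \<sigma> * other_obs_prob m s' a' o'"
    unfolding other_obs_prob_def by (rule sum_PiE_marginal) (use m \<sigma> finite_St in auto)
  finally show ?thesis .
qed

lemma sum_other_obs_prob:
  assumes m: "m < M" and s': "s' \<in> St J" and a': "a' \<in> Ac J" and \<omega>: "\<omega> \<in> Ob (C m)"
  shows "(\<Sum>o'\<in>Ob J. if o' m = \<omega> then other_obs_prob m s' a' o' else 0) = 1"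
proof -
  define h where "h k y = (if k = m then 1 else \<Sum>x\<in>St (C k). emis (C k) x y * trans (C k) (s' k) (a' k) x)" for k y
  have "other_obs_prob m s' a' o' = (\<Prod>k\<in>{..<M}. h k (o' k))" for o'
  proof -
    have "(\<Prod>k\<in>{..<M}. h k (o' k)) = h m (o' m) * (\<Prod>k\<in>{..<M}-{m}. h k (o' k))"
      using m by (simp add: prod.remove)
    also have "(\<Prod>k\<in>{..<M}-{m}. h k (o' k)) = other_obs_prob m s' a' o'"
      unfolding other_obs_prob_def h_def by (rule prod.cong) auto
    finally show ?thesis by (simp add: h_def)
  qed
  then have "(\<Sum>o'\<in>Ob J. if o' m = \<omega> then other_obs_prob m s' a' o' else 0) =
      (\<Sum>o'\<in>PiE {..<M} (\<lambda>k. Ob (C k)). if o' m = \<omega> then (\<Prod>k\<in>{..<M}. h k (o' k)) else 0)"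
    by (simp add: joint_simps)
  also have "\<dots> = h m \<omega>"
  proof (rule sum_PiE_marginal_normalized)
    fix k assume k: "k \<in> {..<M}" "k \<noteq> m"
    have sk: "s' k \<in> St (C k)" and ak: "a' k \<in> Ac (C k)" using s' a' k St_joint_comp Ac_joint_comp by auto
    have w: "wf_pomdp (C k)" using k wf_component by auto
    have "(\<Sum>y\<in>Ob (C k). h k y) = (\<Sum>y\<in>Ob (C k). \<Sum>x\<in>St (C k). emis (C k) x y * trans (C k) (s' k) (a' k) x)"
      using k by (simp add: h_def)
    also have "\<dots> = (\<Sum>x\<in>St (C k). trans (C k) (s' k) (a' k) x * (\<Sum>y\<in>Ob (C k). emis (C k) x y))"
      by (subst sum.swap) (simp add: sum_distrib_left mult_ac)
    also have "\<dots> = (\<Sum>x\<in>St (C k). trans (C k) (s' k) (a' k) x)"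
      using w by (intro sum.cong refl) (auto simp: wf_pomdp_def)
    also have "\<dots> = 1" using w sk ak by (auto simp: wf_pomdp_def)
    finally show "(\<Sum>y\<in>Ob (C k). h k y) = 1" .
  qed (use m \<omega> finite_Ob in auto)
  also have "\<dots> = 1" by (simp add: h_def)
  finally show ?thesis .
qed

definition proj_cut_weight where
  "proj_cut_weight m t \<sigma>' \<alpha>' \<omega> \<alpha> = (\<Sum>s'\<in>St J. \<Sum>a'\<in>Ac J. \<Sum>o'\<in>Ob J. \<Sum>a\<in>Ac J.
     if s' m = \<sigma>' then if a' m = \<alpha>' then if o' m = \<omega> then if a m = \<alpha> then
       other_obs_prob m s' a' o' * K t s' a' o' a else 0 else 0 else 0 else 0)"

lemma proj_cut_factor:
  assumes m: "m < M" and \<sigma>: "\<sigma> \<in> St (C m)"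
  shows "proj_cut m t \<sigma>' \<alpha>' \<sigma> \<omega> \<alpha> = emis (C m) \<sigma> \<omega> * trans (C m) \<sigma>' \<alpha>' \<sigma> * proj_cut_weight m t \<sigma>' \<alpha>' \<omega> \<alpha>"
proof -
  have "proj_cut m t \<sigma>' \<alpha>' \<sigma> \<omega> \<alpha> = (\<Sum>s'\<in>St J. \<Sum>a'\<in>Ac J. \<Sum>o'\<in>Ob J. \<Sum>a\<in>Ac J. \<Sum>s\<in>St J.
     if s' m = \<sigma>' then if a' m = \<alpha>' then if s m = \<sigma> then if o' m = \<omega> then if a m = \<alpha> then
       emis J s o' * trans J s' a' s * K t s' a' o' a else 0 else 0 else 0 else 0 else 0)"
    unfolding proj_cut_def by (intro sum.cong refl) (subst sum_pull_out2, subst sum_pull_out2, rule refl)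
  also have "\<dots> = (\<Sum>s'\<in>St J. \<Sum>a'\<in>Ac J. \<Sum>o'\<in>Ob J. \<Sum>a\<in>Ac J.
     emis (C m) \<sigma> \<omega> * trans (C m) \<sigma>' \<alpha>' \<sigma> * (if s' m = \<sigma>' then if a' m = \<alpha>' then if o' m = \<omega> then if a m = \<alpha> then
       other_obs_prob m s' a' o' * K t s' a' o' a else 0 else 0 else 0 else 0))"
  proof (intro sum.cong refl)
    fix s' a' o' a assume h: "s' \<in> St J" "a' \<in> Ac J" "o' \<in> Ob J" "a \<in> Ac J"
    have "(\<Sum>s\<in>St J. if s m = \<sigma> then emis J s o' * trans J s' a' s * K t s' a' o' a else 0) =
        K t s' a' o' a * (\<Sum>s\<in>St J. if s m = \<sigma> then emis J s o' * trans J s' a' s else 0)"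
      by (simp add: sum_distrib_left mult_if_zero mult_ac)
    also have "\<dots> = K t s' a' o' a * (emis (C m) \<sigma> (o' m) * trans (C m) (s' m) (a' m) \<sigma> * other_obs_prob m s' a' o')"
      using sum_joint_state_marginal[OF m h(1,2,3) \<sigma>] by simp
    finally have E: "(\<Sum>s\<in>St J. if s m = \<sigma> then emis J s o' * trans J s' a' s * K t s' a' o' a else 0) =
        K t s' a' o' a * (emis (C m) \<sigma> (o' m) * trans (C m) (s' m) (a' m) \<sigma> * other_obs_prob m s' a' o')" .
    show "(\<Sum>s\<in>St J. if s' m = \<sigma>' then if a' m = \<alpha>' then if s m = \<sigma> then if o' m = \<omega> then if a m = \<alpha> then
       emis J s o' * trans J s' a' s * K t s' a' o' a else 0 else 0 else 0 else 0 else 0) =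
      emis (C m) \<sigma> \<omega> * trans (C m) \<sigma>' \<alpha>' \<sigma> * (if s' m = \<sigma>' then if a' m = \<alpha>' then if o' m = \<omega> then if a m = \<alpha> then
       other_obs_prob m s' a' o' * K t s' a' o' a else 0 else 0 else 0 else 0)"
      using E by (cases "o' m = \<omega>"; cases "a m = \<alpha>") (simp_all add: sum_if_const mult_ac)
  qed
  also have "\<dots> = emis (C m) \<sigma> \<omega> * trans (C m) \<sigma>' \<alpha>' \<sigma> * proj_cut_weight m t \<sigma>' \<alpha>' \<omega> \<alpha>"
    unfolding proj_cut_weight_def by (simp add: sum_distrib_left)
  finally show ?thesis .
qed

lemma sum_proj_cut_weight:
  assumes m: "m < M" and t: "t \<in> {2..T}" and \<omega>: "\<omega> \<in> Ob (C m)"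
  shows "(\<Sum>\<alpha>\<in>Ac (C m). proj_cut_weight m t \<sigma>' \<alpha>' \<omega> \<alpha>) = (\<Sum>sb\<in>St (C m). proj_sas m (t - 1) \<sigma>' \<alpha>' sb)"
proof -
  have "(\<Sum>\<alpha>\<in>Ac (C m). proj_cut_weight m t \<sigma>' \<alpha>' \<omega> \<alpha>) = (\<Sum>s'\<in>St J. \<Sum>\<alpha>\<in>Ac (C m). \<Sum>a'\<in>Ac J. \<Sum>o'\<in>Ob J. \<Sum>a\<in>Ac J.
     if s' m = \<sigma>' then if a' m = \<alpha>' then if o' m = \<omega> then if a m = \<alpha> then
       other_obs_prob m s' a' o' * K t s' a' o' a else 0 else 0 else 0 else 0)"
    unfolding proj_cut_weight_def by (rule sum.swap)
  also have "\<dots> = (\<Sum>s'\<in>St J. \<Sum>a'\<in>Ac J. \<Sum>o'\<in>Ob J. \<Sum>a\<in>Ac J. \<Sum>\<alpha>\<in>Ac (C m).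
     if s' m = \<sigma>' then if a' m = \<alpha>' then if o' m = \<omega> then if a m = \<alpha> then
       other_obs_prob m s' a' o' * K t s' a' o' a else 0 else 0 else 0 else 0)"
    by (intro sum.cong refl sum_push_in3)
  also have "\<dots> = (\<Sum>s'\<in>St J. \<Sum>a'\<in>Ac J. if s' m = \<sigma>' then if a' m = \<alpha>' then
      (\<Sum>o'\<in>Ob J. if o' m = \<omega> then other_obs_prob m s' a' o' * (\<Sum>a\<in>Ac J. K t s' a' o' a) else 0) else 0 else 0)"
    using m finite_Ac by (simp add: sum_if_const Ac_joint_comp sum_distrib_left)
  also have "\<dots> = (\<Sum>s'\<in>St J. \<Sum>a'\<in>Ac J. if s' m = \<sigma>' then if a' m = \<alpha>' then
      (\<Sum>sb\<in>St J. Y (t - 1) s' a' sb) else 0 else 0)"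
  proof (intro sum.cong refl)
    fix s' a' assume h: "s' \<in> St J" "a' \<in> Ac J"
    have "(\<Sum>o'\<in>Ob J. if o' m = \<omega> then other_obs_prob m s' a' o' * (\<Sum>a\<in>Ac J. K t s' a' o' a) else 0) =
       (\<Sum>o'\<in>Ob J. (\<Sum>sb\<in>St J. Y (t - 1) s' a' sb) * (if o' m = \<omega> then other_obs_prob m s' a' o' else 0))"
      using K_Y[OF t h] by (intro sum.cong refl) (simp)
    also have "\<dots> = (\<Sum>sb\<in>St J. Y (t - 1) s' a' sb)"
      by (simp only: sum_distrib_left[symmetric] sum_other_obs_prob[OF m h \<omega>] mult_1_right)
    finally show "(if s' m = \<sigma>' then if a' m = \<alpha>' then
      (\<Sum>o'\<in>Ob J. if o' m = \<omega> then other_obs_prob m s' a' o' * (\<Sum>a\<in>Ac J. K t s' a' o' a) else 0) else 0 else 0) =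
      (if s' m = \<sigma>' then if a' m = \<alpha>' then (\<Sum>sb\<in>St J. Y (t - 1) s' a' sb) else 0 else 0)" by simp
  qed
  also have "\<dots> = (\<Sum>sb\<in>St (C m). proj_sas m (t - 1) \<sigma>' \<alpha>' sb)"
    by (rule sum_proj_sas[OF m, symmetric])
  finally show ?thesis .
qed

lemma emis_trans_nonneg: "m < M \<Longrightarrow> \<sigma> \<in> St (C m) \<Longrightarrow> \<omega> \<in> Ob (C m) \<Longrightarrow> \<sigma>' \<in> St (C m) \<Longrightarrow> \<alpha>' \<in> Ac (C m) \<Longrightarrow>
   emis (C m) \<sigma> \<omega> * trans (C m) \<sigma>' \<alpha>' \<sigma> \<ge> 0"
  using wf_component by (auto simp: wf_pomdp_def intro!: mult_nonneg_nonneg)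

lemma valid_cuts_proj:
  assumes m: "m < M"
  shows "valid_cuts T (C m) (proj_soa m) (proj_sas m) (proj_cut m)"
  unfolding valid_cuts_def
proof (intro conjI ballI)
  fix t \<sigma>' \<alpha>' \<sigma> \<omega> \<alpha> assume t: "t \<in> {2..T}" and \<sigma>': "\<sigma>' \<in> St (C m)" and \<alpha>': "\<alpha>' \<in> Ac (C m)"
    and \<sigma>: "\<sigma> \<in> St (C m)" and \<omega>: "\<omega> \<in> Ob (C m)" and \<alpha>: "\<alpha> \<in> Ac (C m)"
  show "0 \<le> proj_cut m t \<sigma>' \<alpha>' \<sigma> \<omega> \<alpha>" using proj_cut_nonneg[OF t] .
  define Dn where "Dn = (\<Sum>sb\<in>St (C m). emis (C m) sb \<omega> * trans (C m) \<sigma>' \<alpha>' sb)"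
  have sumc: "(\<Sum>sb\<in>St (C m). proj_cut m t \<sigma>' \<alpha>' sb \<omega> \<alpha>) = Dn * proj_cut_weight m t \<sigma>' \<alpha>' \<omega> \<alpha>"
    unfolding Dn_def using proj_cut_factor[OF m] by (simp add: sum_distrib_right)
  show "proj_cut m t \<sigma>' \<alpha>' \<sigma> \<omega> \<alpha> = pcond (C m) \<sigma>' \<alpha>' \<omega> \<sigma> * (\<Sum>sb\<in>St (C m). proj_cut m t \<sigma>' \<alpha>' sb \<omega> \<alpha>)"
  proof (cases "Dn = 0")
    case True
    have "emis (C m) \<sigma> \<omega> * trans (C m) \<sigma>' \<alpha>' \<sigma> = 0"
      using True \<sigma> finite_St[OF m] emis_trans_nonneg[OF m _ \<omega> \<sigma>' \<alpha>'] unfolding Dn_def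
      by (subst (asm) sum_nonneg_eq_0_iff) auto
    then show ?thesis using proj_cut_factor[OF m \<sigma>] by (auto simp: pcond_def)
  next
    case False
    then show ?thesis using proj_cut_factor[OF m \<sigma>] sumc by (simp add: pcond_def Dn_def[symmetric])
  qed
next
  fix t \<sigma> \<omega> \<alpha> assume t: "t \<in> {2..T}"
  show "(\<Sum>\<sigma>'\<in>St (C m). \<Sum>\<alpha>'\<in>Ac (C m). proj_cut m t \<sigma>' \<alpha>' \<sigma> \<omega> \<alpha>) = proj_soa m t \<sigma> \<omega> \<alpha>"
    using sum_proj_cut_prev[OF m t] .
next
  fix t \<sigma>' \<alpha>' \<sigma> \<omega> assume t: "t \<in> {2..T}" and \<sigma>: "\<sigma> \<in> St (C m)" and \<omega>: "\<omega> \<in> Ob (C m)"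
  show "(\<Sum>\<alpha>\<in>Ac (C m). proj_cut m t \<sigma>' \<alpha>' \<sigma> \<omega> \<alpha>) =
       emis (C m) \<sigma> \<omega> * trans (C m) \<sigma>' \<alpha>' \<sigma> * (\<Sum>sb\<in>St (C m). proj_sas m (t - 1) \<sigma>' \<alpha>' sb)"
    using proj_cut_factor[OF m \<sigma>] sum_proj_cut_weight[OF m t \<omega>] by (simp add: sum_distrib_left[symmetric])
qed

end


lemma policy_valid_uniform:
  assumes "finite (Ac P)" "Ac P \<noteq> {}"
  shows "policy_valid T P (\<lambda>t h a. 1 / real (card (Ac P)))"
  using assms unfolding policy_valid_def by (auto simp: card_gt_0_iff)

context weakly_coupled
begin

lemma relax_of_mdp_feasible:
  assumes "mdp_feasible T J mu1 mu"
  shows "\<exists>tau1 tauo taut dl. relax_feasible T C M q D b tau1 tauo taut dl \<and>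
    relax_obj T C M taut = mdp_obj T J mu"
proof -
  interpret O: joint_occupation C M q D b T "\<lambda>t s o' a. emis J s o' * (\<Sum>s'\<in>St J. mu t s a s')" mu
    by (intro joint_occupation.intro weakly_coupled_axioms occupation_of_mdp_feasible[OF wf_joint assms])
  show ?thesis
    using O.relax_feasible_proj O.relax_obj_proj unfolding mdp_obj_def by blast
qed

lemma relax_cuts_of_policy:
  assumes "policy_valid T J pol"
  shows "\<exists>tau1 tauo taut dl tauc. relax_feasible T C M q D b tau1 tauo taut dl \<and>
    (\<forall>m<M. valid_cuts T (C m) (tauo m) (taut m) (tauc m)) \<and> relax_obj T C M taut = his_value T J pol"
proof -
  interpret R: policy_run J pol T
    using wf_joint assms by unfold_locales
  interpret O: joint_occupation_cuts C M q D b T R.policy_soa R.policy_sas R.policy_cut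
    by (intro joint_occupation_cuts.intro joint_occupation.intro weakly_coupled_axioms
        R.occupation_policy R.occupation_cuts_policy)
  have "relax_obj T C M O.proj_sas = his_value T J pol"
    by (simp add: O.relax_obj_proj R.his_value_policy_sas)
  then show ?thesis
    using O.relax_feasible_proj O.valid_cuts_proj by blast
qed

lemma mdp_feasible_exists: "\<exists>mu1 mu. mdp_feasible T J mu1 mu"
proof -
  interpret R: policy_run J "\<lambda>t h a. 1 / real (card (Ac J))" T
    using wf_joint policy_valid_uniform[OF finite_Ac_joint joint_Ac_nonempty] by unfold_locales
  show ?thesis
    using occupation.mdp_feasible_Y[OF R.occupation_policy] by blast
qed

lemma bdd_above_relax_obj:
  "bdd_above {relax_obj T C M taut | tau1 tauo taut dl. relax_feasible T C M q D b tau1 tauo taut dl}"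
  unfolding bdd_above_def using relax_obj_bounded[OF wf_components] by blast

lemma v_MDP_le_z_R: "v_MDP T J \<le> z_R T C M q D b"
  unfolding v_MDP_def z_R_def
proof (rule cSup_subset_mono[OF _ bdd_above_relax_obj])
  show "{mdp_obj T J mu | mu1 mu. mdp_feasible T J mu1 mu} \<noteq> {}"
    using mdp_feasible_exists by blast
  show "{mdp_obj T J mu | mu1 mu. mdp_feasible T J mu1 mu} \<subseteq>
      {relax_obj T C M taut | tau1 tauo taut dl. relax_feasible T C M q D b tau1 tauo taut dl}"
  proof
    fix v assume "v \<in> {mdp_obj T J mu | mu1 mu. mdp_feasible T J mu1 mu}"
    then obtain mu1 mu where v: "v = mdp_obj T J mu" and "mdp_feasible T J mu1 mu" by blast
    then obtain tau1 tauo taut dl where "relax_feasible T C M q D b tau1 tauo taut dl"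
      and "relax_obj T C M taut = mdp_obj T J mu"
      using relax_of_mdp_feasible by blast
    then show "v \<in> {relax_obj T C M taut | tau1 tauo taut dl. relax_feasible T C M q D b tau1 tauo taut dl}"
      unfolding v mem_Collect_eq by (intro exI conjI) (rule sym)
  qed
qed

lemma relax_cuts_obj_subset:
  "{relax_obj T C M taut | tau1 tauo taut dl tauc. relax_feasible T C M q D b tau1 tauo taut dl \<and>
      (\<forall>m<M. valid_cuts T (C m) (tauo m) (taut m) (tauc m))} \<subseteq>
    {relax_obj T C M taut | tau1 tauo taut dl. relax_feasible T C M q D b tau1 tauo taut dl}"
proof
  fix v assume "v \<in> {relax_obj T C M taut | tau1 tauo taut dl tauc. relax_feasible T C M q D b tau1 tauo taut dl \<and>
      (\<forall>m<M. valid_cuts T (C m) (tauo m) (taut m) (tauc m))}"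
  then obtain tau1 tauo taut dl where "v = relax_obj T C M taut" "relax_feasible T C M q D b tau1 tauo taut dl"
    by blast
  then show "v \<in> {relax_obj T C M taut | tau1 tauo taut dl. relax_feasible T C M q D b tau1 tauo taut dl}"
    by blast
qed

lemma z_Rc_le_z_R: "z_Rc T C M q D b \<le> z_R T C M q D b"
  unfolding z_Rc_def z_R_def
proof (rule cSup_subset_mono[OF _ bdd_above_relax_obj relax_cuts_obj_subset])
  show "{relax_obj T C M taut | tau1 tauo taut dl tauc. relax_feasible T C M q D b tau1 tauo taut dl \<and>
      (\<forall>m<M. valid_cuts T (C m) (tauo m) (taut m) (tauc m))} \<noteq> {}"
  proof -
    obtain tau1 tauo taut dl tauc where "relax_feasible T C M q D b tau1 tauo taut dl"
      and "\<forall>m<M. valid_cuts T (C m) (tauo m) (taut m) (tauc m)"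
      using relax_cuts_of_policy[OF policy_valid_uniform[OF finite_Ac_joint joint_Ac_nonempty]] by blast
    then show ?thesis by blast
  qed
qed

lemma v_his_le_z_Rc: "v_his T J \<le> z_Rc T C M q D b"
  unfolding v_his_def z_Rc_def
proof (rule cSup_subset_mono)
  show "{his_value T J pol | pol. policy_valid T J pol} \<noteq> {}"
    using policy_valid_uniform[OF finite_Ac_joint joint_Ac_nonempty] by blast
  show "bdd_above {relax_obj T C M taut | tau1 tauo taut dl tauc. relax_feasible T C M q D b tau1 tauo taut dl \<and>
      (\<forall>m<M. valid_cuts T (C m) (tauo m) (taut m) (tauc m))}"
    by (rule bdd_above_mono[OF bdd_above_relax_obj relax_cuts_obj_subset])
  show "{his_value T J pol | pol. policy_valid T J pol} \<subseteq>
      {relax_obj T C M taut | tau1 tauo taut dl tauc. relax_feasible T C M q D b tau1 tauo taut dl \<and>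
        (\<forall>m<M. valid_cuts T (C m) (tauo m) (taut m) (tauc m))}"
  proof
    fix v assume "v \<in> {his_value T J pol | pol. policy_valid T J pol}"
    then obtain pol where v: "v = his_value T J pol" and "policy_valid T J pol" by blast
    then obtain tau1 tauo taut dl tauc where "relax_feasible T C M q D b tau1 tauo taut dl"
      and "\<forall>m<M. valid_cuts T (C m) (tauo m) (taut m) (tauc m)"
      and "relax_obj T C M taut = his_value T J pol"
      using relax_cuts_of_policy by blast
    then show "v \<in> {relax_obj T C M taut | tau1 tauo taut dl tauc. relax_feasible T C M q D b tau1 tauo taut dl \<and>
        (\<forall>m<M. valid_cuts T (C m) (tauo m) (taut m) (tauc m))}"
      unfolding v mem_Collect_eq by (intro exI conjI) (rule sym)
  qed
qed

end

theorem mainTheorem4: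
  fixes T M q :: nat
    and C :: "nat \<Rightarrow> ('s, 'o, 'a) pomdp"
    and D :: "nat \<Rightarrow> 'a \<Rightarrow> nat \<Rightarrow> real"
    and b :: "nat \<Rightarrow> real"
  assumes "\<forall>m<M. wf_pomdp (C m)"
    and "\<forall>j<q. b j \<ge> 0"
    and "Ac (joint C M q D b) \<noteq> {}"
  shows "(\<forall>mu1 mu. mdp_feasible T (joint C M q D b) mu1 mu \<longrightarrow>
            (\<exists>tau1 tauo taut dl. relax_feasible T C M q D b tau1 tauo taut dl \<and>
               relax_obj T C M taut = mdp_obj T (joint C M q D b) mu)) \<and>
         v_MDP T (joint C M q D b) \<le> z_R T C M q D b \<and>
         v_his T (joint C M q D b) \<le> z_Rc T C M q D b \<and>
         z_Rc T C M q D b \<le> z_R T C M q D b"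
proof -
  interpret weakly_coupled C M q D b
    using assms(1,3) by unfold_locales
  show ?thesis
    using relax_of_mdp_feasible v_MDP_le_z_R v_his_le_z_Rc z_Rc_le_z_R by blast
qed

end
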